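(* Let $\dot{\mathcal H}$ be the point (bound-state) subspace of the Hydrogen atom Hamiltonian and $\dot H$ the restriction of the Hamiltonian to it, as described in the context. There exists a generic set $\mathcal R\subset\dot{\mathcal H}$ such that for each $|\psi\rangle\in\mathcal R$ and each $0<q<1$, \[D^-_{\mu_{|\psi\rangle}}(q)=0\qquad\text{and}\qquad D^+_{\mu_{|\psi\rangle}}(q)=\tfrac13 .\]
   Context: The Hydrogen atom Hamiltonian is $H=-\Delta-\kappa/|x|$ acting in $\mathrm{L}^2(\mathbb R^3)$, $\kappa>0$ (the unique self-adjoint extension from $C_c^\infty$). Its eigenvalues are $\lambda_n=-\Lambda/n^2$, $n=1,2,\dots$, with $\Lambda=\kappa^2/4$, each of multiplicity $n^2$, with orthonormal eigenfunctions $|n,l,m\rangle$, $l=0,\dots,n-1$, $m=-l,\dots,l$. $\dot{\mathcal H}$ denotes the closed subspace spanned by all $|n,l,m\rangle$, and $\dot H$ the restriction of $H$ to $\dot{\mathcal H}$, so $\dot H\sum a_{n,l,m}|n,l,m\rangle=\sum \lambda_n a_{n,l,m}|n,l,m\rangle$. For $|\psi\rangle=\sum a_{n,l,m}|n,l,m\rangle\in\dot{\mathcal H}$ its spectral measure is $\mu_{|\psi\rangle}=\sum_{n,l,m}|a_{n,l,m}|^2\delta_{\lambda_n}$. For a finite positive Borel measure $\mu$ on $\mathbb R$ and $q>0$, $q\neq1$, set $I_\mu(q,\epsilon)=\int_{\{x:\mu(B(x,\epsilon))>0\}}\mu(B(x,\epsilon))^{q-1}\,d\mu(x)$ with $B(x,\epsilon)=(x-\epsilon,x+\epsilon)$,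 and define the lower and upper generalized fractal dimensions $D^-_\mu(q)=\liminf_{\epsilon\downarrow0}\frac{\ln I_\mu(q,\epsilon)}{(q-1)\ln\epsilon}$, $D^+_\mu(q)=\limsup_{\epsilon\downarrow0}\frac{\ln I_\mu(q,\epsilon)}{(q-1)\ln\epsilon}$. A generic set in a complete metric space is a countable intersection of open dense sets. *)

theory Defs
  imports "HOL-Analysis.Analysis" "HOL-Probability.Probability"
begin

text \<open>Quantum numbers (n,l,m) of the hydrogen bound states.\<close>
definition hyd_index :: "(nat \<times> nat \<times> int) set" where
  "hyd_index = {(n, l, m). 1 \<le> n \<and> l < n \<and> \<bar>m\<bar> \<le> int l}"

definition hyd_eig :: "real \<Rightarrow> nat \<Rightarrow> real" where
  "hyd_eig \<kappa> n = - (\<kappa>\<^sup>2 / 4) / (real n)\<^sup>2"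

text \<open>The point subspace, written in coordinates w.r.t. the orthonormal
  eigenbasis |n,l,m>: square summable coefficient families a_(n,l,m).\<close>
definition point_space :: "(nat \<times> nat \<times> int \<Rightarrow> complex) set" where
  "point_space = {a. (\<forall>i. i \<notin> hyd_index \<longrightarrow> a i = 0) \<and>
                     (\<lambda>i. (cmod (a i))\<^sup>2) summable_on hyd_index}"

definition point_dist :: "(nat \<times> nat \<times> int \<Rightarrow> complex) \<Rightarrow> (nat \<times> nat \<times> int \<Rightarrow> complex) \<Rightarrow> real" where
  "point_dist a b = sqrt (\<Sum>\<^sub>\<infinity> i\<in>hyd_index. (cmod (a i - b i))\<^sup>2)"

definition generic_point_set :: "(nat \<times> nat \<times> int \<Rightarrow> complex) set \<Rightarrow> bool" where
  "generic_point_set R \<longleftrightarrow> (\<exists>U :: nat \<Rightarrow> (nat \<times> nat \<times> int \<Rightarrow> complex) set.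
      (\<forall>k. U k \<subseteq> point_space
         \<and> (\<forall>a\<in>U k. \<exists>r>0. \<forall>b\<in>point_space. point_dist a b < r \<longrightarrow> b \<in> U k)
         \<and> (\<forall>a\<in>point_space. \<forall>r>0. \<exists>b\<in>U k. point_dist a b < r))
      \<and> R = (\<Inter>k. U k))"

definition spec_measure :: "real \<Rightarrow> (nat \<times> nat \<times> int \<Rightarrow> complex) \<Rightarrow> real measure" where
  "spec_measure \<kappa> a = measure_of UNIV (sets borel)
     (\<lambda>A. \<Sum>\<^sub>\<infinity> i\<in>hyd_index. ennreal ((cmod (a i))\<^sup>2) * indicator A (hyd_eig \<kappa> (fst i)))"

definition I_mu :: "real measure \<Rightarrow> real \<Rightarrow> real \<Rightarrow> real" where
  "I_mu M q \<epsilon> = (LINT x:{x. measure M (ball x \<epsilon>) > 0}|M. (measure M (ball x \<epsilon>)) powr (q - 1))"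

definition lower_gen_dim :: "real measure \<Rightarrow> real \<Rightarrow> ereal" where
  "lower_gen_dim M q = Liminf (at_right 0) (\<lambda>\<epsilon>. ereal (ln (I_mu M q \<epsilon>) / ((q - 1) * ln \<epsilon>)))"

definition upper_gen_dim :: "real measure \<Rightarrow> real \<Rightarrow> ereal" where
  "upper_gen_dim M q = Limsup (at_right 0) (\<lambda>\<epsilon>. ereal (ln (I_mu M q \<epsilon>) / ((q - 1) * ln \<epsilon>)))"

end

theory Submission
  imports Defs
begin

text \<open>
  The spectral measure of a is atomic: the eigenvalue -\<Lambda>/n^2 carries the total weight w_n of the
  n-th shell of a. An eigenvalue with n \<le> N is at distance at least \<Lambda>/(N+1)^3 from all others,
  while those with n > N lie in an interval of length \<Lambda>/N^2. Covering that interval by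
  \<epsilon>-cells with N \<approx> \<epsilon> powr (-1/3) gives I_mu(q, \<epsilon>) \<le> C \<epsilon> powr ((q - 1)/3) for every a, hence
  D^+ \<le> 1/3, and the total mass gives I_mu(q, \<epsilon>) \<ge> (\<Sum>w_n) powr q, hence D^- \<ge> 0.

  Near a vector supported on finitely many shells, I_mu stays bounded at some tiny scale \<epsilon>, which
  pushes the ratio ln I_mu / ((q - 1) ln \<epsilon>) towards 0. Near a vector with small equal weights
  on very many shells, these shells are isolated at scale \<Lambda>/N^3 and I_mu is of order
  N powr (1 - q), which pushes the ratio towards 1/3. For each precision 1/k both properties hold
  on open dense sets, and the generic set is the intersection of all of them.
\<close>

lemma sum_powr_le_card_powr:
  fixes x :: "'a \<Rightarrow> real"
  assumes F: "finite F" and nonneg: "\<And>j. j \<in> F \<Longrightarrow> 0 \<le> x j" and q: "0 < q" "q < 1"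
  shows "(\<Sum>j\<in>F. x j powr q) \<le> real (card F) powr (1 - q) * (\<Sum>j\<in>F. x j) powr q"
proof (cases "(\<Sum>j\<in>F. x j) = 0")
  case True
  then have "\<forall>j\<in>F. x j = 0" using sum_nonneg_eq_0_iff[OF F] nonneg by blast
  then show ?thesis by simp
next
  case False
  define S where "S = (\<Sum>j\<in>F. x j)"
  define n where "n = real (card F)"
  define t where "t = S / n"
  have S: "S > 0" using False nonneg by (simp add: S_def sum_nonneg order_less_le)
  have n: "n > 0" using False F by (auto simp: n_def card_gt_0_iff)
  have t: "t > 0" using S n by (simp add: t_def)
  \<comment> \<open>Young's inequality against the mean value t, summed over F\<close>
  have Young: "x j powr q * t powr (1 - q) \<le> q * x j + (1 - q) * t" if "j \<in> F" for j
    using Youngs_inequality_0[of q "1 - q" "x j" t] nonneg[OF that] q t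
    by (cases "x j = 0") auto
  have "(\<Sum>j\<in>F. x j powr q) * t powr (1 - q) = (\<Sum>j\<in>F. x j powr q * t powr (1 - q))"
    by (simp add: sum_distrib_right)
  also have "\<dots> \<le> (\<Sum>j\<in>F. q * x j + (1 - q) * t)"
    by (intro sum_mono Young)
  also have "\<dots> = q * S + (1 - q) * t * n"
    by (simp add: sum.distrib sum_distrib_left S_def n_def)
  also have "\<dots> = S"
    using n by (simp add: t_def field_simps)
  finally have "(\<Sum>j\<in>F. x j powr q) \<le> S / t powr (1 - q)"
    using t by (simp add: field_simps)
  also have "S / t powr (1 - q) = n powr (1 - q) * S powr q"
    using S n by (simp add: t_def powr_divide powr_diff field_simps)
  finally show ?thesis by (simp add: n_def S_def)
qed

lemma
  fixes f g :: "'a \<Rightarrow> 'b::real_normed_vector"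
  assumes f: "(\<lambda>i. (norm (f i))\<^sup>2) summable_on S" and g: "(\<lambda>i. (norm (g i))\<^sup>2) summable_on S"
  shows square_summable_add: "(\<lambda>i. (norm (f i + g i))\<^sup>2) summable_on S"
    and sqrt_infsum_square_add_le: "sqrt (\<Sum>\<^sub>\<infinity>i\<in>S. (norm (f i + g i))\<^sup>2)
           \<le> sqrt (\<Sum>\<^sub>\<infinity>i\<in>S. (norm (f i))\<^sup>2) + sqrt (\<Sum>\<^sub>\<infinity>i\<in>S. (norm (g i))\<^sup>2)"
proof -
  show sum: "(\<lambda>i. (norm (f i + g i))\<^sup>2) summable_on S"
  proof (rule summable_on_comparison_test)
    show "(\<lambda>i. 2 * (norm (f i))\<^sup>2 + 2 * (norm (g i))\<^sup>2) summable_on S"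
      by (intro summable_on_add summable_on_cmult_right f g)
    fix i
    have "(norm (f i + g i))\<^sup>2 \<le> (norm (f i) + norm (g i))\<^sup>2"
      by (intro power_mono norm_triangle_ineq) auto
    also have "\<dots> \<le> 2 * (norm (f i))\<^sup>2 + 2 * (norm (g i))\<^sup>2"
      using sum_squares_ge_zero[of "norm (f i) - norm (g i)" 0]
      by (simp add: power2_eq_square algebra_simps)
    finally show "(norm (f i + g i))\<^sup>2 \<le> 2 * (norm (f i))\<^sup>2 + 2 * (norm (g i))\<^sup>2" .
  qed simp
  define A where "A = sqrt (\<Sum>\<^sub>\<infinity>i\<in>S. (norm (f i))\<^sup>2)"
  define B where "B = sqrt (\<Sum>\<^sub>\<infinity>i\<in>S. (norm (g i))\<^sup>2)"
  have "A \<ge> 0" "B \<ge> 0" by (auto simp: A_def B_def infsum_nonneg)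
  have "(\<Sum>\<^sub>\<infinity>i\<in>S. (norm (f i + g i))\<^sup>2) \<le> (A + B)\<^sup>2"
  proof (rule infsum_le_finite_sums[OF sum])
    fix F assume F: "finite F" "F \<subseteq> S"
    have "L2_set (\<lambda>i. norm (f i)) F \<le> A" "L2_set (\<lambda>i. norm (g i)) F \<le> B"
      unfolding L2_set_def A_def B_def
      by (intro real_sqrt_le_mono finite_sum_le_infsum f g F; simp)+
    moreover have "L2_set (\<lambda>i. norm (f i + g i)) F \<le> L2_set (\<lambda>i. norm (f i) + norm (g i)) F"
      by (intro L2_set_mono norm_triangle_ineq) auto
    ultimately have "L2_set (\<lambda>i. norm (f i + g i)) F \<le> A + B"
      using L2_set_triangle_ineq[of "\<lambda>i. norm (f i)" "\<lambda>i. norm (g i)" F] by linarith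
    then have "(L2_set (\<lambda>i. norm (f i + g i)) F)\<^sup>2 \<le> (A + B)\<^sup>2"
      by (intro power_mono L2_set_nonneg)
    then show "(\<Sum>i\<in>F. (norm (f i + g i))\<^sup>2) \<le> (A + B)\<^sup>2"
      by (simp add: L2_set_def sum_nonneg)
  qed
  then have "sqrt (\<Sum>\<^sub>\<infinity>i\<in>S. (norm (f i + g i))\<^sup>2) \<le> A + B"
    using \<open>A \<ge> 0\<close> \<open>B \<ge> 0\<close> by (intro real_le_lsqrt) auto
  then show "sqrt (\<Sum>\<^sub>\<infinity>i\<in>S. (norm (f i + g i))\<^sup>2)
      \<le> sqrt (\<Sum>\<^sub>\<infinity>i\<in>S. (norm (f i))\<^sup>2) + sqrt (\<Sum>\<^sub>\<infinity>i\<in>S. (norm (g i))\<^sup>2)"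
    by (simp add: A_def B_def)
qed

lemma powr_le_mult_powr:
  fixes x y c r :: real
  assumes "0 \<le> x" "x \<le> c * y" "1 \<le> c" "0 \<le> r" "r \<le> 1"
  shows "x powr r \<le> c * y powr r"
proof -
  have "0 \<le> y" using assms order.trans[OF assms(1,2)] by (auto simp: zero_le_mult_iff)
  have "x powr r \<le> (c * y) powr r" using assms by (intro powr_mono2) auto
  also have "\<dots> = c powr r * y powr r" using assms \<open>0 \<le> y\<close> by (simp add: powr_mult)
  also have "c powr r \<le> c" using assms powr_mono[of r 1 c] by simp
  then have "c powr r * y powr r \<le> c * y powr r" by (intro mult_right_mono) auto
  finally show ?thesis .
qed

lemma powr_le_one_add:
  fixes x r :: real
  assumes "0 \<le> x" "0 \<le> r" "r \<le> 1"
  shows "x powr r \<le> 1 + x"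
proof (cases "x \<le> 1")
  case True
  then show ?thesis using assms powr_le1[of r x] by linarith
next
  case False
  then show ?thesis using assms powr_mono[of r 1 x] by simp
qed

lemma suminf_split_at:
  fixes f :: "nat \<Rightarrow> 'a::real_normed_vector"
  assumes "summable f"
  shows "suminf f = (\<Sum>n\<le>N. f n) + (\<Sum>n. if N < n then f n else 0)"
proof -
  have head: "summable (\<lambda>n. if n \<le> N then f n else 0)"
    by (rule summable_finite[of "{..N}"]) auto
  have "(\<lambda>n. if N < n then f n else 0) = (\<lambda>n. f n - (if n \<le> N then f n else 0))"
    by auto
  then have "(\<Sum>n. if N < n then f n else 0) = suminf f - (\<Sum>n. if n \<le> N then f n else 0)"
    using suminf_diff[OF assms head] by simp
  also have "(\<Sum>n. if n \<le> N then f n else 0) = (\<Sum>n\<le>N. f n)"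
    by (subst suminf_finite[of "{..N}"]) auto
  finally show ?thesis by simp
qed

lemma sums_Sigma_finite:
  fixes f :: "nat \<times> 'b \<Rightarrow> 'a::{topological_comm_monoid_add,t3_space}"
  assumes "f summable_on Sigma UNIV B" "\<And>n. finite (B n)"
  shows "(\<lambda>n. \<Sum>y\<in>B n. f (n, y)) sums (\<Sum>\<^sub>\<infinity>i\<in>Sigma UNIV B. f i)"
proof -
  have "((\<lambda>n. \<Sum>y\<in>B n. f (n, y)) has_sum (\<Sum>\<^sub>\<infinity>i\<in>Sigma UNIV B. f i)) UNIV"
    using assms by (intro has_sum_SigmaD[OF has_sum_infsum]) (auto intro: has_sum_finite)
  then show ?thesis by (rule has_sum_imp_sums)
qed

lemma infsum_ennreal:
  fixes g :: "'a \<Rightarrow> real"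
  assumes "g summable_on A" "\<And>x. x \<in> A \<Longrightarrow> 0 \<le> g x"
  shows "(\<Sum>\<^sub>\<infinity>x\<in>A. ennreal (g x)) = ennreal (\<Sum>\<^sub>\<infinity>x\<in>A. g x)"
proof -
  have "sum (ennreal \<circ> g) F = ennreal (sum g F)" if "finite F" "F \<subseteq> A" for F
    using that assms(2) by (auto simp: subset_iff)
  then have "infsum (ennreal \<circ> g) A = ennreal (infsum g A)"
    by (simp add: infsum_comm_additive_general assms(1))
  then show ?thesis by (simp add: comp_def)
qed

lemma Liminf_le_if_frequently:
  fixes f :: "'a \<Rightarrow> 'b::complete_linorder"
  assumes "\<exists>\<^sub>F x in F. f x \<le> c"
  shows "Liminf F f \<le> c"
proof (rule Liminf_least)
  fix P assume "eventually P F"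
  then obtain x where "P x" "f x \<le> c"
    using frequently_ex[OF frequently_eventually_frequently[OF assms]] by blast
  then show "Inf (f ` Collect P) \<le> c" by (meson INF_lower2 mem_Collect_eq)
qed

lemma Limsup_ge_if_frequently:
  fixes f :: "'a \<Rightarrow> 'b::complete_linorder"
  assumes "\<exists>\<^sub>F x in F. c \<le> f x"
  shows "c \<le> Limsup F f"
proof (rule Limsup_greatest)
  fix P assume "eventually P F"
  then obtain x where "P x" "c \<le> f x"
    using frequently_ex[OF frequently_eventually_frequently[OF assms]] by blast
  then show "c \<le> Sup (f ` Collect P)" by (meson SUP_upper2 mem_Collect_eq)
qed

lemma tendsto_divide_ln_at_right_0:
  fixes c q :: real
  assumes "q < 1"
  shows "((\<lambda>\<epsilon>. c / ((q - 1) * ln \<epsilon>)) \<longlongrightarrow> 0) (at_right 0)"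
proof -
  have "filterlim (\<lambda>\<epsilon>::real. (1 - q) * - ln \<epsilon>) at_top (at_right 0)"
    using assms ln_at_0
    by (intro filterlim_tendsto_pos_mult_at_top[OF tendsto_const])
      (auto simp: filterlim_uminus_at_bot)
  then have "filterlim (\<lambda>\<epsilon>::real. (q - 1) * ln \<epsilon>) at_infinity (at_right 0)"
    by (simp add: algebra_simps filterlim_at_top_imp_at_infinity)
  then show ?thesis by (rule tendsto_divide_0[OF tendsto_const])
qed

lemma frequently_at_right_0I:
  assumes "\<And>\<delta>. 0 < \<delta> \<Longrightarrow> \<exists>\<epsilon>. 0 < \<epsilon> \<and> \<epsilon> < \<delta> \<and> P \<epsilon>"
  shows "\<exists>\<^sub>F \<epsilon> in at_right (0::real). P \<epsilon>"
  unfolding frequently_def eventually_at_right_field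
proof
  assume "\<exists>b>0. \<forall>\<epsilon>>0. \<epsilon> < b \<longrightarrow> \<not> P \<epsilon>"
  then obtain b where "0 < b" "\<forall>\<epsilon>>0. \<epsilon> < b \<longrightarrow> \<not> P \<epsilon>" by blast
  then show False using assms[of b] by blast
qed

lemma exists_nat_inverse_less:
  assumes "(0::real) < d"
  shows "\<exists>k\<ge>k0. 1 / real k < d"
proof -
  obtain n where n: "0 < n" "inverse (real n) < d" using ex_inverse_of_nat_less[OF assms] by blast
  have "1 / real (n + k0) \<le> 1 / real n" using n by (intro divide_left_mono) auto
  then show ?thesis using n by (intro exI[of _ "n + k0"]) (auto simp: inverse_eq_divide)
qed

section \<open>Atomic measures on the real line\<close>

definition atomic_measure :: "(nat \<Rightarrow> real) \<Rightarrow> (nat \<Rightarrow> real) \<Rightarrow> real measure" where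
  "atomic_measure x p = distr (density (count_space UNIV) (\<lambda>n. ennreal (p n))) borel x"

lemma space_atomic_measure [simp]: "space (atomic_measure x p) = UNIV"
  and sets_atomic_measure [simp]: "sets (atomic_measure x p) = sets borel"
  by (simp_all add: atomic_measure_def)

lemma emeasure_atomic_measure:
  assumes "A \<in> sets borel"
  shows "emeasure (atomic_measure x p) A = (\<Sum>n. ennreal (p n) * indicator A (x n))"
proof -
  have "emeasure (atomic_measure x p) A
      = (\<integral>\<^sup>+ n. ennreal (p n) * indicator (x -` A) n \<partial>count_space UNIV)"
    unfolding atomic_measure_def using assms
    by (simp add: emeasure_distr emeasure_density)
  also have "\<dots> = (\<Sum>n. ennreal (p n) * indicator A (x n))"
    by (simp add: nn_integral_count_space_nat indicator_def)
  finally show ?thesis .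
qed

lemma nn_integral_atomic_measure:
  assumes "f \<in> borel_measurable borel"
  shows "(\<integral>\<^sup>+ y. f y \<partial>atomic_measure x p) = (\<Sum>n. ennreal (p n) * f (x n))"
  unfolding atomic_measure_def using assms
  by (simp add: nn_integral_distr nn_integral_density nn_integral_count_space_nat)

definition correlation_term :: "(nat \<Rightarrow> real) \<Rightarrow> (nat \<Rightarrow> real) \<Rightarrow> real \<Rightarrow> real \<Rightarrow> nat \<Rightarrow> real" where
  "correlation_term x p q \<epsilon> n = p n * measure (atomic_measure x p) (ball (x n) \<epsilon>) powr (q - 1)"

locale summable_weights =
  fixes p :: "nat \<Rightarrow> real"
  assumes nonneg [simp]: "\<And>n. 0 \<le> p n" and summable: "summable p"
begin

lemma summable_restrict: "summable (\<lambda>n. if P n then p n else 0)"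
  by (rule summable_comparison_test'[OF summable]) auto

lemma summable_mult_indicator: "summable (\<lambda>n. p n * indicator A (y n))"
  by (rule summable_comparison_test'[OF summable]) (auto simp: indicator_def)

lemma suminf_restrict_nonneg: "0 \<le> (\<Sum>n. if P n then p n else 0)"
  by (intro suminf_nonneg summable_restrict) simp

lemma suminf_restrict_le: "(\<Sum>n. if P n then p n else 0) \<le> suminf p"
  by (intro suminf_le summable_restrict summable) simp

lemma weight_le_suminf_restrict:
  assumes "P n"
  shows "p n \<le> (\<Sum>m. if P m then p m else 0)"
proof -
  have "p n = (\<Sum>m. if m = n then p m else 0)"
    using sums_single[of n p] by (simp add: sums_iff)
  also have "\<dots> \<le> (\<Sum>m. if P m then p m else 0)"
    using assms by (intro suminf_le summable_restrict) auto
  finally show ?thesis .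
qed

lemma emeasure_atomic_measure_eq_ennreal:
  assumes "A \<in> sets borel"
  shows "emeasure (atomic_measure x p) A = ennreal (\<Sum>n. p n * indicator A (x n))"
proof -
  have "emeasure (atomic_measure x p) A = (\<Sum>n. ennreal (p n * indicator A (x n)))"
    by (simp add: emeasure_atomic_measure[OF assms] ennreal_mult'' ennreal_indicator)
  also have "\<dots> = ennreal (\<Sum>n. p n * indicator A (x n))"
    by (rule suminf_ennreal2) (auto simp: summable_mult_indicator)
  finally show ?thesis .
qed

lemma measure_atomic_measure:
  assumes "A \<in> sets borel"
  shows "measure (atomic_measure x p) A = (\<Sum>n. p n * indicator A (x n))"
  using emeasure_atomic_measure_eq_ennreal[OF assms]
  by (simp add: measure_def suminf_nonneg summable_mult_indicator)

lemma measure_atomic_measure_ball: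
  "measure (atomic_measure x p) (ball y \<epsilon>) = (\<Sum>n. p n * indicator (ball y \<epsilon>) (x n))"
  by (simp add: measure_atomic_measure)

lemma measure_ball_le_suminf: "measure (atomic_measure x p) (ball y \<epsilon>) \<le> suminf p"
  unfolding measure_atomic_measure_ball
  by (intro suminf_le summable_mult_indicator summable) (simp add: indicator_def)

lemma measure_ball_ge_suminf_restrict:
  assumes "\<And>m. P m \<Longrightarrow> x m \<in> ball y \<epsilon>"
  shows "(\<Sum>m. if P m then p m else 0) \<le> measure (atomic_measure x p) (ball y \<epsilon>)"
  unfolding measure_atomic_measure_ball using assms
  by (intro suminf_le summable_restrict summable_mult_indicator) auto

lemma weight_le_measure_ball:
  assumes "0 < \<epsilon>"
  shows "p n \<le> measure (atomic_measure x p) (ball (x n) \<epsilon>)"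
  using weight_le_suminf_restrict[of "\<lambda>m. m = n"]
    measure_ball_ge_suminf_restrict[of "\<lambda>m. m = n" x "x n" \<epsilon>] assms
  by force

lemma measure_ball_isolated:
  assumes "0 < \<epsilon>" and "\<And>m. m \<noteq> n \<Longrightarrow> x m \<notin> ball (x n) \<epsilon>"
  shows "measure (atomic_measure x p) (ball (x n) \<epsilon>) = p n"
proof -
  have "(\<lambda>m. p m * indicator (ball (x n) \<epsilon>) (x m)) = (\<lambda>m. if m = n then p m else 0)"
    using assms by (auto simp: indicator_def)
  then show ?thesis
    using sums_single[of n p] by (simp add: measure_atomic_measure_ball sums_iff)
qed

lemma correlation_term_nonneg: "0 \<le> correlation_term x p q \<epsilon> n"
  by (simp add: correlation_term_def)

lemma correlation_term_le_powr:
  assumes "0 < \<epsilon>" "q < 1"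
  shows "correlation_term x p q \<epsilon> n \<le> p n powr q"
proof (cases "p n = 0")
  case False
  then have "p n > 0" using nonneg[of n] by linarith
  then have "correlation_term x p q \<epsilon> n \<le> p n * p n powr (q - 1)"
    unfolding correlation_term_def using weight_le_measure_ball[OF assms(1)] assms(2)
    by (intro mult_left_mono powr_mono2') auto
  then show ?thesis by (simp add: powr_mult_base)
qed (simp add: correlation_term_def)

lemma correlation_term_isolated:
  assumes "0 < \<epsilon>" and "\<And>m. m \<noteq> n \<Longrightarrow> x m \<notin> ball (x n) \<epsilon>"
  shows "correlation_term x p q \<epsilon> n = p n powr q"
  by (simp add: correlation_term_def powr_mult_base
      measure_ball_isolated[where x=x and n=n, OF assms])

lemma correlation_term_ge:
  assumes "0 < \<epsilon>" "q < 1"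
  shows "p n * suminf p powr (q - 1) \<le> correlation_term x p q \<epsilon> n"
proof (cases "p n = 0")
  case False
  then have "0 < measure (atomic_measure x p) (ball (x n) \<epsilon>)"
    using weight_le_measure_ball[OF assms(1), of n x] nonneg[of n] by linarith
  then show ?thesis
    unfolding correlation_term_def using measure_ball_le_suminf assms(2)
    by (intro mult_left_mono powr_mono2') auto
qed (simp add: correlation_term_def)

lemma correlation_term_le_cluster:
  assumes "q < 1" "P n" and cluster: "\<And>m. P m \<Longrightarrow> x m \<in> ball (x n) \<epsilon>"
  shows "correlation_term x p q \<epsilon> n \<le> p n * (\<Sum>m. if P m then p m else 0) powr (q - 1)"
proof (cases "p n = 0")
  case False
  then have "0 < p n" "p n \<le> (\<Sum>m. if P m then p m else 0)"
    using nonneg[of n] weight_le_suminf_restrict[of P, OF assms(2)] by (auto simp: less_le)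
  then show ?thesis
    unfolding correlation_term_def using assms measure_ball_ge_suminf_restrict[OF cluster]
    by (intro mult_left_mono powr_mono2') auto
qed (simp add: correlation_term_def)

lemma sums_by_cells:
  assumes F: "finite F" and cell: "\<And>n. n \<in> S \<Longrightarrow> c n \<in> F"
  shows "(\<lambda>n. if n \<in> S then f (c n) * p n else 0)
           sums (\<Sum>j\<in>F. f j * (\<Sum>n. if n \<in> S \<and> c n = j then p n else 0))"
proof -
  have "(\<lambda>n. \<Sum>j\<in>F. f j * (if n \<in> S \<and> c n = j then p n else 0))
      sums (\<Sum>j\<in>F. f j * (\<Sum>n. if n \<in> S \<and> c n = j then p n else 0))"
    by (intro sums_sum sums_mult summable_sums summable_restrict)
  moreover have "(\<Sum>j\<in>F. f j * (if n \<in> S \<and> c n = j then p n else 0))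
      = (if n \<in> S then f (c n) * p n else 0)" for n
    using cell F by (cases "n \<in> S") (auto simp: if_distrib[of "(*) _"] cong: if_cong)
  ultimately show ?thesis by simp
qed

text \<open>Each cell lies in the \<epsilon>-ball around any of its points, so the terms of a cell of mass s
  add up to at most s powr q; concavity of powr q then sums over the cells.\<close>
lemma correlation_sum_partition:
  assumes F: "finite F" and q: "0 < q" "q < 1"
    and cell: "\<And>n. n \<in> S \<Longrightarrow> c n \<in> F"
    and close: "\<And>m n. m \<in> S \<Longrightarrow> n \<in> S \<Longrightarrow> c m = c n \<Longrightarrow> x m \<in> ball (x n) \<epsilon>"
  shows "summable (\<lambda>n. if n \<in> S then correlation_term x p q \<epsilon> n else 0)"
    and "(\<Sum>n. if n \<in> S then correlation_term x p q \<epsilon> n else 0)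
           \<le> real (card F) powr (1 - q) * (\<Sum>n. if n \<in> S then p n else 0) powr q"
proof -
  define s where "s j = (\<Sum>n. if n \<in> S \<and> c n = j then p n else 0)" for j
  have s_nonneg: "0 \<le> s j" for j
    unfolding s_def by (rule suminf_restrict_nonneg)
  have term_le: "(if n \<in> S then correlation_term x p q \<epsilon> n else 0)
      \<le> (if n \<in> S then s (c n) powr (q - 1) * p n else 0)" for n
    unfolding s_def using q close correlation_term_le_cluster[of q "\<lambda>m. m \<in> S \<and> c m = c n" n x \<epsilon>]
    by (auto simp: mult.commute)
  have sums_term: "(\<lambda>n. if n \<in> S then s (c n) powr (q - 1) * p n else 0) sums (\<Sum>j\<in>F. s j powr q)"
    using sums_by_cells[where S = S and c = c, OF F cell, where f = "\<lambda>j. s j powr (q - 1)"] s_nonneg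
    by (simp add: s_def[symmetric] powr_mult_base mult.commute)
  have sums_weight: "(\<lambda>n. if n \<in> S then p n else 0) sums (\<Sum>j\<in>F. s j)"
    using sums_by_cells[where S = S and c = c, OF F cell, where f = "\<lambda>_. 1"]
    by (simp add: s_def cong: if_cong)
  show summable: "summable (\<lambda>n. if n \<in> S then correlation_term x p q \<epsilon> n else 0)"
    by (rule summable_comparison_test'[OF sums_summable[OF sums_term]])
      (use term_le correlation_term_nonneg in auto)
  have "(\<Sum>n. if n \<in> S then correlation_term x p q \<epsilon> n else 0) \<le> (\<Sum>j\<in>F. s j powr q)"
    using suminf_le[OF term_le summable sums_summable[OF sums_term]] sums_term
    by (simp add: sums_iff)
  also have "\<dots> \<le> real (card F) powr (1 - q) * (\<Sum>j\<in>F. s j) powr q"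
    by (rule sum_powr_le_card_powr[OF F s_nonneg q])
  also have "(\<Sum>j\<in>F. s j) = (\<Sum>n. if n \<in> S then p n else 0)"
    using sums_weight by (simp add: sums_iff)
  finally show "(\<Sum>n. if n \<in> S then correlation_term x p q \<epsilon> n else 0)
      \<le> real (card F) powr (1 - q) * (\<Sum>n. if n \<in> S then p n else 0) powr q" .
qed

lemma correlation_sum_interval:
  assumes \<epsilon>: "0 < \<epsilon>" and q: "0 < q" "q < 1" and L: "0 \<le> L"
    and S: "\<And>n. n \<in> S \<Longrightarrow> x n \<in> {a..a + L}"
  shows "summable (\<lambda>n. if n \<in> S then correlation_term x p q \<epsilon> n else 0)"
    and "(\<Sum>n. if n \<in> S then correlation_term x p q \<epsilon> n else 0)
           \<le> (L / \<epsilon> + 1) powr (1 - q) * (\<Sum>n. if n \<in> S then p n else 0) powr q"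
proof -
  define c where "c n = nat \<lfloor>(x n - a) / \<epsilon>\<rfloor>" for n
  define F where "F = {..nat \<lfloor>L / \<epsilon>\<rfloor>}"
  have cell: "c n \<in> F" if "n \<in> S" for n
    using S[OF that] \<epsilon> unfolding c_def F_def
    by (auto intro!: nat_mono floor_mono divide_right_mono)
  have close: "x m \<in> ball (x n) \<epsilon>" if "m \<in> S" "n \<in> S" "c m = c n" for m n
  proof -
    have "\<lfloor>(x m - a) / \<epsilon>\<rfloor> = \<lfloor>(x n - a) / \<epsilon>\<rfloor>"
      using that S \<epsilon> by (simp add: c_def eq_nat_nat_iff)
    then have "\<bar>(x m - a) / \<epsilon> - (x n - a) / \<epsilon>\<bar> < 1" by linarith
    then show ?thesis using \<epsilon> by (simp add: dist_real_def diff_divide_distrib[symmetric])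
  qed
  have card: "real (card F) \<le> L / \<epsilon> + 1"
    using L \<epsilon> by (simp add: F_def)
  show "summable (\<lambda>n. if n \<in> S then correlation_term x p q \<epsilon> n else 0)"
    by (rule correlation_sum_partition(1)[OF _ q cell close]) (simp add: F_def)
  have "(\<Sum>n. if n \<in> S then correlation_term x p q \<epsilon> n else 0)
      \<le> real (card F) powr (1 - q) * (\<Sum>n. if n \<in> S then p n else 0) powr q"
    by (rule correlation_sum_partition(2)[OF _ q cell close]) (simp add: F_def)
  also have "\<dots> \<le> (L / \<epsilon> + 1) powr (1 - q) * (\<Sum>n. if n \<in> S then p n else 0) powr q"
    using card q by (intro mult_right_mono powr_mono2) auto
  finally show "(\<Sum>n. if n \<in> S then correlation_term x p q \<epsilon> n else 0)
      \<le> (L / \<epsilon> + 1) powr (1 - q) * (\<Sum>n. if n \<in> S then p n else 0) powr q" .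
qed

lemma measurable_measure_ball:
  "(\<lambda>y. measure (atomic_measure x p) (ball y \<epsilon>)) \<in> borel_measurable borel"
proof -
  have "(\<lambda>y. measure (atomic_measure x p) (ball y \<epsilon>)) = (\<lambda>y. \<Sum>n. p n * indicator (ball (x n) \<epsilon>) y)"
    by (simp add: measure_atomic_measure_ball indicator_def dist_commute)
  also have "\<dots> \<in> borel_measurable borel"
    by (intro borel_measurable_suminf borel_measurable_times borel_measurable_const
        borel_measurable_indicator) auto
  finally show ?thesis .
qed

lemma I_mu_atomic_measure:
  assumes "summable (correlation_term x p q \<epsilon>)"
  shows "I_mu (atomic_measure x p) q \<epsilon> = suminf (correlation_term x p q \<epsilon>)"
proof -
  let ?M = "atomic_measure x p"
  let ?m = "\<lambda>y. measure ?M (ball y \<epsilon>)"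
  have "I_mu ?M q \<epsilon> = integral\<^sup>L ?M (\<lambda>y. ?m y powr (q - 1))"
    unfolding I_mu_def set_lebesgue_integral_def
    by (intro Bochner_Integration.integral_cong)
      (auto simp: indicator_def not_less measure_le_0_iff)
  also have "\<dots> = enn2real (\<integral>\<^sup>+ y. ennreal (?m y powr (q - 1)) \<partial>?M)"
    using measurable_measure_ball
    by (intro integral_eq_nn_integral) (simp_all add: atomic_measure_def)
  also have "(\<integral>\<^sup>+ y. ennreal (?m y powr (q - 1)) \<partial>?M) = (\<Sum>n. ennreal (correlation_term x p q \<epsilon> n))"
    using measurable_measure_ball
    by (simp add: nn_integral_atomic_measure correlation_term_def ennreal_mult'')
  also have "\<dots> = ennreal (suminf (correlation_term x p q \<epsilon>))"
    using assms by (intro suminf_ennreal2) (auto simp: correlation_term_nonneg)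
  finally show ?thesis
    using assms by (simp add: suminf_nonneg correlation_term_nonneg)
qed

lemma correlation_sum_ge_total:
  assumes "summable (correlation_term x p q \<epsilon>)" "0 < \<epsilon>" "q < 1"
  shows "suminf p powr q \<le> suminf (correlation_term x p q \<epsilon>)"
proof (cases "suminf p = 0")
  case False
  then have "0 < suminf p" using suminf_nonneg[OF summable] nonneg by (simp add: less_le)
  then have "suminf p powr q = suminf p * suminf p powr (q - 1)"
    by (simp add: powr_mult_base)
  also have "\<dots> = (\<Sum>n. p n * suminf p powr (q - 1))"
    by (rule suminf_mult2[OF summable])
  also have "\<dots> \<le> suminf (correlation_term x p q \<epsilon>)"
    using assms by (intro suminf_le correlation_term_ge summable_mult2 summable)
  finally show ?thesis .
qed (use assms in \<open>simp add: suminf_nonneg correlation_term_nonneg\<close>)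

lemma correlation_sum_ge_isolated:
  assumes "summable (correlation_term x p q \<epsilon>)" "0 < \<epsilon>" "finite G"
    and isolated: "\<And>m n. n \<in> G \<Longrightarrow> m \<noteq> n \<Longrightarrow> x m \<notin> ball (x n) \<epsilon>"
  shows "(\<Sum>n\<in>G. p n powr q) \<le> suminf (correlation_term x p q \<epsilon>)"
proof -
  have "(\<Sum>n\<in>G. p n powr q) = (\<Sum>n\<in>G. correlation_term x p q \<epsilon> n)"
    using assms(2) isolated by (intro sum.cong refl correlation_term_isolated[symmetric]) auto
  also have "\<dots> \<le> suminf (correlation_term x p q \<epsilon>)"
    using assms by (intro sum_le_suminf) (auto simp: correlation_term_nonneg)
  finally show ?thesis .
qed

lemma sum_powr_atMost_le:
  assumes "0 < q" "q < 1"
  shows "(\<Sum>n\<le>N. p n powr q) \<le> (real N + 1) powr (1 - q) * suminf p powr q"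
proof -
  have "(\<Sum>n\<le>N. p n powr q) \<le> (real N + 1) powr (1 - q) * (\<Sum>n\<le>N. p n) powr q"
    using assms sum_powr_le_card_powr[of "{..N}" p q] by (simp add: algebra_simps)
  also have "\<dots> \<le> (real N + 1) powr (1 - q) * suminf p powr q"
    using assms by (intro mult_left_mono powr_mono2 sum_le_suminf summable) (auto intro: sum_nonneg)
  finally show ?thesis .
qed

lemma tail_tendsto_zero:
  "(\<lambda>N. \<Sum>n. if N < n then p n else 0) \<longlonglongrightarrow> 0"
proof -
  have "(\<lambda>N. suminf p - (\<Sum>n\<le>N. p n)) \<longlonglongrightarrow> suminf p - suminf p"
    by (intro tendsto_diff tendsto_const summable_LIMSEQ' summable)
  moreover have "(\<lambda>N. suminf p - (\<Sum>n\<le>N. p n)) = (\<lambda>N. \<Sum>n. if N < n then p n else 0)"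
  proof
    fix N show "suminf p - (\<Sum>n\<le>N. p n) = (\<Sum>n. if N < n then p n else 0)"
      using suminf_split_at[OF summable, of N] by simp
  qed
  ultimately show ?thesis by simp
qed

end

section \<open>The hydrogen spectrum\<close>

definition rydberg :: "real \<Rightarrow> real" where
  "rydberg \<kappa> = \<kappa>\<^sup>2 / 4"

lemma rydberg_pos: "0 < \<kappa> \<Longrightarrow> 0 < rydberg \<kappa>"
  by (simp add: rydberg_def)

lemma hyd_eig_eq: "hyd_eig \<kappa> n = - rydberg \<kappa> / (real n)\<^sup>2"
  by (simp add: hyd_eig_def rydberg_def)

lemma hyd_eig_tail_bounds:
  assumes "0 < \<kappa>" "0 < N" "N \<le> n"
  shows "hyd_eig \<kappa> n \<in> {- rydberg \<kappa> / (real N)\<^sup>2..0}"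
proof -
  have "(real N)\<^sup>2 \<le> (real n)\<^sup>2" using assms by (simp add: power_mono)
  then show ?thesis
    using assms rydberg_pos[of \<kappa>] by (simp add: hyd_eig_eq frac_le)
qed

lemma hyd_eig_bounds: "0 < \<kappa> \<Longrightarrow> hyd_eig \<kappa> n \<in> {- rydberg \<kappa>..0}"
  using hyd_eig_tail_bounds[of \<kappa> 1 n] rydberg_pos[of \<kappa>] by (cases "n = 0") (auto simp: hyd_eig_eq)

lemma inverse_square_gap:
  assumes "1 \<le> j" "j < k"
  shows "1 / (real j + 1) ^ 3 \<le> 1 / (real j)\<^sup>2 - 1 / (real k)\<^sup>2"
proof -
  define x where "x = real j"
  have x: "1 \<le> x" using assms by (simp add: x_def)
  have "1 / (x + 1) ^ 3 \<le> 1 / x\<^sup>2 - 1 / (x + 1)\<^sup>2"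
  proof -
    have "1 / x\<^sup>2 - 1 / (x + 1)\<^sup>2 - 1 / (x + 1) ^ 3
        = ((x + 1) ^ 3 - x\<^sup>2 * (x + 1) - x\<^sup>2) / (x\<^sup>2 * (x + 1) ^ 3)"
      using x by (simp add: field_simps) (simp add: eval_nat_numeral algebra_simps)
    also have "(x + 1) ^ 3 - x\<^sup>2 * (x + 1) - x\<^sup>2 = x\<^sup>2 + 3 * x + 1"
      by (simp add: power2_eq_square power3_eq_cube algebra_simps)
    finally have "1 / x\<^sup>2 - 1 / (x + 1)\<^sup>2 - 1 / (x + 1) ^ 3
        = (x\<^sup>2 + 3 * x + 1) / (x\<^sup>2 * (x + 1) ^ 3)" .
    moreover have "0 \<le> (x\<^sup>2 + 3 * x + 1) / (x\<^sup>2 * (x + 1) ^ 3)"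
      using x zero_le_power2[of x] by (intro divide_nonneg_pos) auto
    ultimately show ?thesis by simp
  qed
  moreover have "1 / (real k)\<^sup>2 \<le> 1 / (x + 1)\<^sup>2"
    using assms x by (intro divide_left_mono power_mono) (auto simp: x_def)
  ultimately show ?thesis by (simp add: x_def)
qed

text \<open>For m = 0 the term 1 / (real m)^2 is 0 by the convention x / 0 = 0, as is hyd_eig \<kappa> 0.\<close>
lemma inverse_square_separated:
  assumes "1 \<le> n" "n \<le> N" "m \<noteq> n"
  shows "1 / (real N + 1) ^ 3 \<le> \<bar>1 / (real m)\<^sup>2 - 1 / (real n)\<^sup>2\<bar>"
proof (cases "m = 0")
  case True
  have "(real n)\<^sup>2 \<le> (real N + 1) ^ 3"
  proof -
    have "(real n)\<^sup>2 \<le> (real N + 1)\<^sup>2" using assms by (intro power_mono) auto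
    also have "\<dots> \<le> (real N + 1) ^ 3" by (intro power_increasing) auto
    finally show ?thesis .
  qed
  then show ?thesis using True assms by (simp add: frac_le)
next
  case False
  define j where "j = min m n"
  define k where "k = max m n"
  have "1 / (real j + 1) ^ 3 \<le> 1 / (real j)\<^sup>2 - 1 / (real k)\<^sup>2"
    using False assms by (intro inverse_square_gap) (auto simp: j_def k_def)
  moreover have "1 / (real N + 1) ^ 3 \<le> 1 / (real j + 1) ^ 3"
    using assms by (intro divide_left_mono power_mono) (auto simp: j_def)
  moreover have "1 / (real j)\<^sup>2 - 1 / (real k)\<^sup>2 = \<bar>1 / (real m)\<^sup>2 - 1 / (real n)\<^sup>2\<bar>"
    using False assms by (cases "m < n") (auto simp: j_def k_def frac_le)
  ultimately show ?thesis by linarith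
qed

lemma hyd_eig_separated:
  assumes "0 < \<kappa>" "1 \<le> n" "n \<le> N" "m \<noteq> n"
  shows "rydberg \<kappa> / (real N + 1) ^ 3 \<le> \<bar>hyd_eig \<kappa> m - hyd_eig \<kappa> n\<bar>"
proof -
  have "hyd_eig \<kappa> m - hyd_eig \<kappa> n = rydberg \<kappa> * (1 / (real n)\<^sup>2 - 1 / (real m)\<^sup>2)"
    by (simp add: hyd_eig_eq algebra_simps)
  then have "\<bar>hyd_eig \<kappa> m - hyd_eig \<kappa> n\<bar> = rydberg \<kappa> * \<bar>1 / (real m)\<^sup>2 - 1 / (real n)\<^sup>2\<bar>"
    using rydberg_pos[OF assms(1)] by (simp add: abs_mult abs_minus_commute)
  then show ?thesis
    using mult_left_mono[OF inverse_square_separated[OF assms(2-4)], of "rydberg \<kappa>"]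
      rydberg_pos[OF assms(1)] by simp
qed

context summable_weights
begin

lemma summable_correlation_hyd:
  assumes "0 < \<kappa>" "0 < \<epsilon>" "0 < q" "q < 1"
  shows "summable (correlation_term (hyd_eig \<kappa>) p q \<epsilon>)"
  using correlation_sum_interval(1)[OF assms(2-4), of "rydberg \<kappa>" UNIV "hyd_eig \<kappa>" "- rydberg \<kappa>"]
    hyd_eig_bounds[OF assms(1)] rydberg_pos[OF assms(1)] by simp

lemma correlation_sum_hyd_isolated:
  assumes "0 < \<kappa>" "0 < q" "q < 1" "0 < \<epsilon>" "\<epsilon> \<le> rydberg \<kappa> / (real N + 1) ^ 3"
    and "G \<subseteq> {1..N}"
  shows "(\<Sum>n\<in>G. p n powr q) \<le> suminf (correlation_term (hyd_eig \<kappa>) p q \<epsilon>)"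
proof (rule correlation_sum_ge_isolated)
  show "summable (correlation_term (hyd_eig \<kappa>) p q \<epsilon>)"
    using assms by (intro summable_correlation_hyd)
  show "finite G" using assms(6) finite_subset by blast
  fix m n assume "n \<in> G" "m \<noteq> n"
  then show "hyd_eig \<kappa> m \<notin> ball (hyd_eig \<kappa> n) \<epsilon>"
    using hyd_eig_separated[OF assms(1), of n N m] assms by (auto simp: dist_real_def)
qed (use assms in auto)

text \<open>The shells up to N are handled one by one; those beyond N are packed into the interval of
  length rydberg / N^2 where all higher eigenvalues accumulate.\<close>
lemma correlation_sum_hyd_split:
  assumes \<kappa>: "0 < \<kappa>" and q: "0 < q" "q < 1" and \<epsilon>: "0 < \<epsilon>" and N: "0 < N"
  shows "suminf (correlation_term (hyd_eig \<kappa>) p q \<epsilon>)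
    \<le> (\<Sum>n\<le>N. p n powr q)
      + (rydberg \<kappa> / ((real N)\<^sup>2 * \<epsilon>) + 1) powr (1 - q) * (\<Sum>n. if N < n then p n else 0) powr q"
proof -
  let ?c = "correlation_term (hyd_eig \<kappa>) p q \<epsilon>"
  define L where "L = rydberg \<kappa> / (real N)\<^sup>2"
  have "(\<Sum>n\<le>N. ?c n) \<le> (\<Sum>n\<le>N. p n powr q)"
    using \<epsilon> q by (intro sum_mono correlation_term_le_powr) auto
  moreover have "(\<Sum>n. if n \<in> {n. N < n} then ?c n else 0)
      \<le> (L / \<epsilon> + 1) powr (1 - q) * (\<Sum>n. if n \<in> {n. N < n} then p n else 0) powr q"
    using \<kappa> N rydberg_pos[OF \<kappa>] hyd_eig_tail_bounds[OF \<kappa> N]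
    by (intro correlation_sum_interval(2)[OF \<epsilon> q, of L _ _ "- L"]) (auto simp: L_def)
  moreover have "L / \<epsilon> = rydberg \<kappa> / ((real N)\<^sup>2 * \<epsilon>)" by (simp add: L_def)
  ultimately show ?thesis
    using suminf_split_at[OF summable_correlation_hyd[OF \<kappa> \<epsilon> q], of N] by simp
qed

lemma correlation_sum_hyd_upper:
  assumes \<kappa>: "0 < \<kappa>" and q: "0 < q" "q < 1" and \<epsilon>: "0 < \<epsilon>" "\<epsilon> \<le> 1"
  shows "suminf (correlation_term (hyd_eig \<kappa>) p q \<epsilon>)
    \<le> (rydberg \<kappa> + 4) * \<epsilon> powr ((q - 1) / 3) * suminf p powr q"
proof -
  define E where "E = \<epsilon> powr (- 1 / 3)"
  define T where "T = suminf p"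
  define N where "N = nat \<lceil>E\<rceil>"
  define \<Lambda> where "\<Lambda> = rydberg \<kappa>"
  have T: "0 \<le> T" by (simp add: T_def suminf_nonneg summable)
  have \<Lambda>: "0 < \<Lambda>" using rydberg_pos[OF \<kappa>] by (simp add: \<Lambda>_def)
  have E: "1 \<le> E" using \<epsilon> by (simp add: E_def powr_minus_divide powr_le1)
  have E3: "E * E * E * \<epsilon> = 1"
    using \<epsilon> by (simp add: E_def powr_add[symmetric] powr_minus_divide)
  have N: "E \<le> real N" "real N < E + 1" "0 < N"
    using E by (auto simp: N_def) linarith+
  \<comment> \<open>the cutoff N \<approx> \<epsilon> powr (-1/3) balances the number of shells against the cluster length\<close>
  have "(real N + 1) powr (1 - q) \<le> 3 * E powr (1 - q)"
    using N E q by (intro powr_le_mult_powr) auto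
  then have head: "(\<Sum>n\<le>N. p n powr q) \<le> 3 * E powr (1 - q) * T powr q"
    using sum_powr_atMost_le[OF q, of N] mult_right_mono[of _ _ "T powr q"] by (force simp: T_def)
  have tail: "(\<Lambda> / ((real N)\<^sup>2 * \<epsilon>) + 1) powr (1 - q) * (\<Sum>n. if N < n then p n else 0) powr q
      \<le> (\<Lambda> + 1) * E powr (1 - q) * T powr q"
  proof (intro mult_mono powr_le_mult_powr powr_mono2)
    have "E * E * \<epsilon> \<le> (real N)\<^sup>2 * \<epsilon>"
      using N E \<epsilon> by (intro mult_right_mono) (auto simp: power2_eq_square intro: mult_mono)
    then have "\<Lambda> / ((real N)\<^sup>2 * \<epsilon>) \<le> \<Lambda> / (E * E * \<epsilon>)"
      using \<Lambda> E \<epsilon> N(3) by (intro divide_left_mono) (auto intro!: mult_pos_pos)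
    also have "\<Lambda> / (E * E * \<epsilon>) = \<Lambda> * E"
      using E3 E \<epsilon> by (simp add: field_simps)
    finally show "\<Lambda> / ((real N)\<^sup>2 * \<epsilon>) + 1 \<le> (\<Lambda> + 1) * E"
      using E by (simp add: algebra_simps)
    show "(\<Sum>n. if N < n then p n else 0) \<le> T"
      unfolding T_def by (rule suminf_restrict_le)
  qed (use q \<Lambda> \<epsilon> in \<open>auto intro: suminf_restrict_nonneg\<close>)
  have "- 1 / 3 * (1 - q) = (q - 1) / 3" by (simp add: field_simps)
  then have "E powr (1 - q) = \<epsilon> powr ((q - 1) / 3)"
    by (simp only: E_def powr_powr)
  then show ?thesis
    using correlation_sum_hyd_split[OF \<kappa> q \<epsilon>(1) N(3)] head tail
    by (simp add: \<Lambda>_def T_def algebra_simps)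
qed

lemma correlation_sum_hyd_bounded:
  fixes k :: real
  assumes \<kappa>: "0 < \<kappa>" and q: "0 < q" "q < 1" and \<epsilon>: "0 < \<epsilon>" and N: "0 < N" and kq: "1 \<le> k * q"
    and tail: "(\<Sum>n. if N < n then p n else 0) \<le> (rydberg \<kappa> / ((real N)\<^sup>2 * \<epsilon>) + 1) powr (- k)"
  shows "suminf (correlation_term (hyd_eig \<kappa>) p q \<epsilon>) \<le> (real N + 1) * (1 + suminf p) + 1"
proof -
  define B where "B = rydberg \<kappa> / ((real N)\<^sup>2 * \<epsilon>) + 1"
  have B: "1 \<le> B" using rydberg_pos[OF \<kappa>] \<epsilon> by (simp add: B_def)
  have "(real N + 1) powr (1 - q) \<le> real N + 1"
    using q powr_mono[of "1 - q" 1 "real N + 1"] by simp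
  moreover have "suminf p powr q \<le> 1 + suminf p"
    using q suminf_nonneg[OF summable] by (intro powr_le_one_add) auto
  ultimately have head: "(\<Sum>n\<le>N. p n powr q) \<le> (real N + 1) * (1 + suminf p)"
    using sum_powr_atMost_le[OF q, of N] by (meson mult_mono order_trans powr_ge_zero)

  have "(\<Sum>n. if N < n then p n else 0) powr q \<le> (B powr (- k)) powr q"
    using tail q suminf_restrict_nonneg by (intro powr_mono2) (auto simp: B_def)
  then have "B powr (1 - q) * (\<Sum>n. if N < n then p n else 0) powr q
      \<le> B powr (1 - q) * B powr (- k * q)"
    by (intro mult_left_mono) (simp_all add: powr_powr)
  also have "\<dots> = B powr (1 - q - k * q)"
    using B by (simp add: powr_add[symmetric])
  also have "\<dots> \<le> B powr 0" using B kq q by (intro powr_mono) auto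
  finally show ?thesis
    using correlation_sum_hyd_split[OF \<kappa> q \<epsilon> N] head B by (simp add: B_def)
qed

end

type_synonym coeffs = "nat \<times> nat \<times> int \<Rightarrow> complex"

definition shell :: "nat \<Rightarrow> (nat \<times> int) set" where
  "shell n = {(l, m). l < n \<and> \<bar>m\<bar> \<le> int l}"

definition shell_weight :: "coeffs \<Rightarrow> nat \<Rightarrow> real" where
  "shell_weight a n = (\<Sum>y\<in>shell n. (cmod (a (n, y)))\<^sup>2)"

lemma finite_shell: "finite (shell n)"
proof -
  have "shell n \<subseteq> {..<n} \<times> {- int n..int n}" by (auto simp: shell_def)
  then show ?thesis by (rule finite_subset) auto
qed

lemma hyd_index_eq_Sigma: "hyd_index = Sigma UNIV shell"
  by (auto simp: hyd_index_def shell_def)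

lemma shell_weight_nonneg: "0 \<le> shell_weight a n"
  by (simp add: shell_weight_def sum_nonneg)

lemma shell_weight_sums:
  assumes "(\<lambda>i. (cmod (a i))\<^sup>2) summable_on hyd_index"
  shows "shell_weight a sums (\<Sum>\<^sub>\<infinity>i\<in>hyd_index. (cmod (a i))\<^sup>2)"
  using sums_Sigma_finite[of "\<lambda>i. (cmod (a i))\<^sup>2" shell] assms finite_shell
  by (simp add: shell_weight_def[abs_def] hyd_index_eq_Sigma)

lemma summable_weights_shell_weight:
  "(\<lambda>i. (cmod (a i))\<^sup>2) summable_on hyd_index \<Longrightarrow> summable_weights (shell_weight a)"
  using shell_weight_sums by unfold_locales (auto simp: shell_weight_nonneg sums_iff)

lemma square_summable_point_space:
  "a \<in> point_space \<Longrightarrow> (\<lambda>i. (cmod (a i))\<^sup>2) summable_on hyd_index"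
  by (simp add: point_space_def)

lemma spec_measure_eq_atomic_measure:
  assumes a: "a \<in> point_space"
  shows "spec_measure \<kappa> a = atomic_measure (hyd_eig \<kappa>) (shell_weight a)"
proof -
  let ?M = "atomic_measure (hyd_eig \<kappa>) (shell_weight a)"
  interpret summable_weights "shell_weight a"
    by (rule summable_weights_shell_weight[OF square_summable_point_space[OF a]])
  have "(\<Sum>\<^sub>\<infinity>i\<in>hyd_index. ennreal ((cmod (a i))\<^sup>2) * indicator A (hyd_eig \<kappa> (fst i)))
      = emeasure ?M A" if A: "A \<in> sets borel" for A
  proof -
    define g where "g = (\<lambda>i. (cmod (a i))\<^sup>2 * indicator A (hyd_eig \<kappa> (fst i)))"
    have g: "g summable_on hyd_index"
      by (rule summable_on_comparison_test[OF square_summable_point_space[OF a]])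
        (auto simp: g_def indicator_def)
    have "(\<Sum>\<^sub>\<infinity>i\<in>hyd_index. ennreal ((cmod (a i))\<^sup>2) * indicator A (hyd_eig \<kappa> (fst i)))
        = ennreal (infsum g hyd_index)"
      using infsum_ennreal[OF g] by (simp add: g_def ennreal_mult'' ennreal_indicator)
    also have "infsum g hyd_index = (\<Sum>n. shell_weight a n * indicator A (hyd_eig \<kappa> n))"
      using sums_Sigma_finite[of g shell] g finite_shell
      by (simp add: hyd_index_eq_Sigma sums_iff g_def shell_weight_def sum_distrib_right)
    also have "ennreal \<dots> = emeasure ?M A"
      by (rule emeasure_atomic_measure_eq_ennreal[OF A, symmetric])
    finally show ?thesis .
  qed
  then have "spec_measure \<kappa> a = measure_of UNIV (sets borel) (emeasure ?M)"
    unfolding spec_measure_def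
    by (intro measure_of_eq) (auto simp: sets.sigma_sets_eq[of borel, simplified])
  also have "\<dots> = ?M"
    using measure_of_of_measure[of ?M] by simp
  finally show ?thesis .
qed

lemma point_dist_commute: "point_dist a b = point_dist b a"
  unfolding point_dist_def by (simp add: norm_minus_commute)

lemma point_dist_self [simp]: "point_dist a a = 0"
  by (simp add: point_dist_def)

lemma point_dist_nonneg: "0 \<le> point_dist a b"
  by (simp add: point_dist_def infsum_nonneg)

lemma square_summable_diff:
  assumes "a \<in> point_space" "b \<in> point_space"
  shows "(\<lambda>i. (cmod (a i - b i))\<^sup>2) summable_on hyd_index"
  using square_summable_add[OF square_summable_point_space[OF assms(1)], of "\<lambda>i. - b i"]
    square_summable_point_space[OF assms(2)] by simp

lemma point_dist_triangle:
  assumes "a \<in> point_space" "b \<in> point_space" "c \<in> point_space"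
  shows "point_dist a c \<le> point_dist a b + point_dist b c"
  using sqrt_infsum_square_add_le[OF square_summable_diff[OF assms(1,2)]
      square_summable_diff[OF assms(2,3)]]
  by (simp add: point_dist_def)

lemma point_dist_square:
  assumes "a \<in> point_space" "b \<in> point_space"
  shows "(point_dist a b)\<^sup>2 = suminf (shell_weight (\<lambda>i. a i - b i))"
  using shell_weight_sums[OF square_summable_diff[OF assms]]
  by (simp add: point_dist_def infsum_nonneg sums_iff)

lemma summable_weights_shell_weight_diff:
  "a \<in> point_space \<Longrightarrow> b \<in> point_space \<Longrightarrow> summable_weights (shell_weight (\<lambda>i. a i - b i))"
  by (rule summable_weights_shell_weight[OF square_summable_diff])

lemma sqrt_shell_weight_le:
  assumes a: "a \<in> point_space" and b: "b \<in> point_space"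
  shows "sqrt (shell_weight b n) \<le> sqrt (shell_weight a n) + point_dist a b"
proof -
  interpret d: summable_weights "shell_weight (\<lambda>i. b i - a i)"
    by (rule summable_weights_shell_weight_diff[OF b a])
  have "sqrt (\<Sum>\<^sub>\<infinity>y\<in>shell n. (cmod (a (n, y) + (b (n, y) - a (n, y))))\<^sup>2)
      \<le> sqrt (\<Sum>\<^sub>\<infinity>y\<in>shell n. (cmod (a (n, y)))\<^sup>2)
        + sqrt (\<Sum>\<^sub>\<infinity>y\<in>shell n. (cmod (b (n, y) - a (n, y)))\<^sup>2)"
    by (rule sqrt_infsum_square_add_le) (simp_all add: finite_shell)
  then have "sqrt (shell_weight b n)
      \<le> sqrt (shell_weight a n) + sqrt (shell_weight (\<lambda>i. b i - a i) n)"
    by (simp add: shell_weight_def finite_shell)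
  also have "shell_weight (\<lambda>i. b i - a i) n \<le> (point_dist b a)\<^sup>2"
    using d.weight_le_suminf_restrict[of "\<lambda>_. True" n] d.summable
    by (simp add: point_dist_square[OF b a])
  finally show ?thesis
    by (simp add: point_dist_commute point_dist_nonneg)
qed

lemma sqrt_total_weight_le:
  assumes a: "a \<in> point_space" and b: "b \<in> point_space"
  shows "sqrt (suminf (shell_weight a)) \<le> sqrt (suminf (shell_weight b)) + point_dist a b"
  using sqrt_infsum_square_add_le[OF square_summable_point_space[OF b] square_summable_diff[OF a b]]
    shell_weight_sums[OF square_summable_point_space[OF a]]
    shell_weight_sums[OF square_summable_point_space[OF b]]
  by (simp add: sums_iff point_dist_def)

lemma tail_weight_le_point_dist:
  assumes a: "a \<in> point_space" and b: "b \<in> point_space"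
    and b_vanishes: "\<And>i. N < fst i \<Longrightarrow> b i = 0"
  shows "(\<Sum>n. if N < n then shell_weight a n else 0) \<le> (point_dist a b)\<^sup>2"
proof -
  interpret d: summable_weights "shell_weight (\<lambda>i. a i - b i)"
    by (rule summable_weights_shell_weight_diff[OF a b])
  have "(\<Sum>n. if N < n then shell_weight a n else 0)
      = (\<Sum>n. if N < n then shell_weight (\<lambda>i. a i - b i) n else 0)"
    by (intro suminf_cong) (auto simp: shell_weight_def b_vanishes)
  also have "\<dots> \<le> (point_dist a b)\<^sup>2"
    using d.suminf_restrict_le by (simp add: point_dist_square[OF a b])
  finally show ?thesis .
qed

definition truncate :: "nat \<Rightarrow> coeffs \<Rightarrow> coeffs" where
  "truncate N a = (\<lambda>i. if fst i \<le> N then a i else 0)"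

lemma truncate_in_point_space: "a \<in> point_space \<Longrightarrow> truncate N a \<in> point_space"
proof -
  assume a: "a \<in> point_space"
  have "(\<lambda>i. (cmod (truncate N a i))\<^sup>2) summable_on hyd_index"
    by (rule summable_on_comparison_test[OF square_summable_point_space[OF a]])
      (auto simp: truncate_def)
  then show ?thesis using a by (auto simp: point_space_def truncate_def)
qed

lemma truncate_approx:
  assumes a: "a \<in> point_space" and r: "0 < r"
  shows "\<exists>N>0. point_dist a (truncate N a) < r"
proof -
  interpret summable_weights "shell_weight a"
    by (rule summable_weights_shell_weight[OF square_summable_point_space[OF a]])
  have "eventually (\<lambda>N. (\<Sum>n. if N < n then shell_weight a n else 0) < r\<^sup>2 \<and> 0 < N) sequentially"
    using order_tendstoD(2)[OF tail_tendsto_zero, of "r\<^sup>2"] r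
    by (auto intro: eventually_conj eventually_gt_at_top)
  then obtain N where N: "(\<Sum>n. if N < n then shell_weight a n else 0) < r\<^sup>2" "0 < N"
    using eventually_sequentially by auto
  have "(point_dist a (truncate N a))\<^sup>2 = suminf (shell_weight (\<lambda>i. a i - truncate N a i))"
    by (rule point_dist_square[OF a truncate_in_point_space[OF a]])
  also have "\<dots> = (\<Sum>n. if N < n then shell_weight a n else 0)"
    by (intro suminf_cong) (auto simp: shell_weight_def truncate_def)
  finally have "(point_dist a (truncate N a))\<^sup>2 < r\<^sup>2" using N by simp
  then show ?thesis
    using N r power2_less_imp_less[of _ r] by (intro exI[of _ N]) auto
qed

lemma I_mu_spec_measure:
  assumes "0 < \<kappa>" "a \<in> point_space" "0 < q" "q < 1" "0 < \<epsilon>"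
  shows "I_mu (spec_measure \<kappa> a) q \<epsilon> = suminf (correlation_term (hyd_eig \<kappa>) (shell_weight a) q \<epsilon>)"
proof -
  interpret summable_weights "shell_weight a"
    by (rule summable_weights_shell_weight[OF square_summable_point_space[OF assms(2)]])
  show ?thesis
    using assms
    by (simp add: spec_measure_eq_atomic_measure I_mu_atomic_measure summable_correlation_hyd)
qed

lemma I_mu_spec_measure_ge_total:
  assumes \<kappa>: "0 < \<kappa>" and a: "a \<in> point_space" and q: "0 < q" "q < 1" and \<epsilon>: "0 < \<epsilon>"
  shows "suminf (shell_weight a) powr q \<le> I_mu (spec_measure \<kappa> a) q \<epsilon>"
proof -
  interpret summable_weights "shell_weight a"
    by (rule summable_weights_shell_weight[OF square_summable_point_space[OF a]])
  show ?thesis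
    using correlation_sum_ge_total[OF summable_correlation_hyd[OF \<kappa> \<epsilon> q] \<epsilon> q(2)]
    by (simp add: I_mu_spec_measure[OF \<kappa> a q \<epsilon>])
qed

section \<open>Generic sets\<close>

definition point_open :: "coeffs set \<Rightarrow> bool" where
  "point_open U \<longleftrightarrow> U \<subseteq> point_space \<and>
     (\<forall>a\<in>U. \<exists>r>0. \<forall>b\<in>point_space. point_dist a b < r \<longrightarrow> b \<in> U)"

definition point_dense :: "coeffs set \<Rightarrow> bool" where
  "point_dense U \<longleftrightarrow> (\<forall>a\<in>point_space. \<forall>r>0. \<exists>b\<in>U. point_dist a b < r)"

lemma generic_point_set_iff:
  "generic_point_set R \<longleftrightarrow>
    (\<exists>U :: nat \<Rightarrow> coeffs set. (\<forall>k. point_open (U k) \<and> point_dense (U k)) \<and> R = (\<Inter>k. U k))"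
  by (simp add: generic_point_set_def point_open_def point_dense_def)

lemma generic_point_setI:
  fixes U :: "nat \<Rightarrow> coeffs set"
  assumes "\<And>k. point_open (U k) \<and> point_dense (U k)"
  shows "generic_point_set (\<Inter>k. U k)"
  unfolding generic_point_set_iff using assms by blast

lemma generic_point_set_Int:
  assumes "generic_point_set A" "generic_point_set B"
  shows "generic_point_set (A \<inter> B)"
proof -
  obtain U :: "nat \<Rightarrow> coeffs set" where U: "\<forall>k. point_open (U k) \<and> point_dense (U k)" "A = (\<Inter>k. U k)"
    using assms(1) unfolding generic_point_set_iff by blast
  obtain V :: "nat \<Rightarrow> coeffs set" where V: "\<forall>k. point_open (V k) \<and> point_dense (V k)" "B = (\<Inter>k. V k)"
    using assms(2) unfolding generic_point_set_iff by blast
  define W where "W k = (if even k then U (k div 2) else V (k div 2))" for k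
  have "A \<inter> B = (\<Inter>k. W k)"
  proof (intro equalityI subsetI)
    fix a assume a: "a \<in> (\<Inter>k. W k)"
    have "a \<in> U k" "a \<in> V k" for k
      using a[THEN INT_D, of "2 * k"] a[THEN INT_D, of "2 * k + 1"] by (simp_all add: W_def)
    then show "a \<in> A \<inter> B" by (simp add: U(2) V(2))
  qed (auto simp: U(2) V(2) W_def)
  moreover have "\<forall>k. point_open (W k) \<and> point_dense (W k)"
    using U(1) V(1) by (simp add: W_def)
  ultimately show ?thesis
    unfolding generic_point_set_iff by (intro exI[of _ W]) simp
qed

definition point_interior :: "(coeffs \<Rightarrow> bool) \<Rightarrow> coeffs set" where
  "point_interior P = {a \<in> point_space. \<exists>r>0. \<forall>c\<in>point_space. point_dist a c < r \<longrightarrow> P c}"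

lemma point_interior_imp: "a \<in> point_interior P \<Longrightarrow> P a"
  by (auto simp: point_interior_def)

lemma point_interior_subset: "point_interior P \<subseteq> point_space"
  by (auto simp: point_interior_def)

lemma point_open_interior: "point_open (point_interior P)"
  unfolding point_open_def
proof (intro conjI point_interior_subset ballI)
  fix a assume "a \<in> point_interior P"
  then obtain r where a: "a \<in> point_space" and "0 < r"
    and P: "\<forall>c\<in>point_space. point_dist a c < r \<longrightarrow> P c"
    by (auto simp: point_interior_def)
  show "\<exists>s>0. \<forall>b\<in>point_space. point_dist a b < s \<longrightarrow> b \<in> point_interior P"
  proof (intro exI[of _ r] conjI ballI impI \<open>0 < r\<close>)
    fix b assume b: "b \<in> point_space" "point_dist a b < r"
    have "\<forall>c\<in>point_space. point_dist b c < r - point_dist a b \<longrightarrow> P c"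
      using P point_dist_triangle[OF a b(1)] by fastforce
    then show "b \<in> point_interior P"
      using b unfolding point_interior_def
      by (intro CollectI conjI exI[of _ "r - point_dist a b"]) auto
  qed
qed

lemma point_dense_interior:
  assumes "\<And>a r. a \<in> point_space \<Longrightarrow> 0 < r \<Longrightarrow> \<exists>b\<in>point_space. point_dist a b < r \<and>
      (\<exists>s>0. \<forall>c\<in>point_space. point_dist b c < s \<longrightarrow> P c)"
  shows "point_dense (point_interior P)"
  using assms unfolding point_dense_def point_interior_def by blast

section \<open>Dimension ratios at small scales\<close>

definition dim_ratio :: "real \<Rightarrow> coeffs \<Rightarrow> real \<Rightarrow> real \<Rightarrow> real" where
  "dim_ratio \<kappa> a q \<epsilon> = ln (I_mu (spec_measure \<kappa> a) q \<epsilon>) / ((q - 1) * ln \<epsilon>)"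

lemma dim_ratio_ge_total:
  assumes \<kappa>: "0 < \<kappa>" and a: "a \<in> point_space" and q: "0 < q" "q < 1" and \<epsilon>: "0 < \<epsilon>" "\<epsilon> < 1"
    and T: "0 < suminf (shell_weight a)"
  shows "q * ln (suminf (shell_weight a)) / ((q - 1) * ln \<epsilon>) \<le> dim_ratio \<kappa> a q \<epsilon>"
proof -
  have le: "suminf (shell_weight a) powr q \<le> I_mu (spec_measure \<kappa> a) q \<epsilon>"
    using I_mu_spec_measure_ge_total[OF \<kappa> a q \<epsilon>(1)] .
  have pos: "0 < suminf (shell_weight a) powr q" using T by simp
  have "ln (suminf (shell_weight a) powr q) \<le> ln (I_mu (spec_measure \<kappa> a) q \<epsilon>)"
    by (rule ln_mono[OF le pos])
  then have "q * ln (suminf (shell_weight a)) \<le> ln (I_mu (spec_measure \<kappa> a) q \<epsilon>)"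
    by simp
  moreover have "0 < (q - 1) * ln \<epsilon>" using q \<epsilon> by (simp add: mult_neg_neg)
  ultimately show ?thesis by (simp add: dim_ratio_def divide_right_mono)
qed

lemma dim_ratio_le_third:
  assumes \<kappa>: "0 < \<kappa>" and a: "a \<in> point_space" and q: "0 < q" "q < 1" and \<epsilon>: "0 < \<epsilon>" "\<epsilon> < 1"
    and T: "0 < suminf (shell_weight a)"
  shows "dim_ratio \<kappa> a q \<epsilon>
    \<le> (ln (rydberg \<kappa> + 4) + q * ln (suminf (shell_weight a))) / ((q - 1) * ln \<epsilon>) + 1 / 3"
proof -
  define A where "A = ln (rydberg \<kappa> + 4) + q * ln (suminf (shell_weight a))"
  define D where "D = (q - 1) * ln \<epsilon>"
  define U where "U = (rydberg \<kappa> + 4) * \<epsilon> powr ((q - 1) / 3) * suminf (shell_weight a) powr q"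
  have D: "0 < D" using q \<epsilon> by (simp add: D_def mult_neg_neg)
  interpret summable_weights "shell_weight a"
    by (rule summable_weights_shell_weight[OF square_summable_point_space[OF a]])
  have I: "I_mu (spec_measure \<kappa> a) q \<epsilon> \<le> U"
    using correlation_sum_hyd_upper[OF \<kappa> q \<epsilon>(1)] \<epsilon>
    by (simp add: I_mu_spec_measure[OF \<kappa> a q \<epsilon>(1)] U_def)
  have "0 < suminf (shell_weight a) powr q" using T by simp
  then have "0 < I_mu (spec_measure \<kappa> a) q \<epsilon>"
    using I_mu_spec_measure_ge_total[OF \<kappa> a q \<epsilon>(1)] by (rule less_le_trans)
  then have "ln (I_mu (spec_measure \<kappa> a) q \<epsilon>) \<le> ln U" using I by simp
  also have "ln U = A + D / 3"
    using rydberg_pos[OF \<kappa>] \<epsilon> T by (simp add: U_def A_def D_def ln_mult)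
  finally have "dim_ratio \<kappa> a q \<epsilon> \<le> (A + D / 3) / D"
    unfolding dim_ratio_def D_def[symmetric] using D by (auto intro: divide_right_mono)
  also have "\<dots> = A / D + 1 / 3"
    using D by (simp add: add_divide_distrib)
  finally show ?thesis by (simp add: A_def D_def)
qed

definition has_low_scale :: "real \<Rightarrow> nat \<Rightarrow> coeffs \<Rightarrow> bool" where
  "has_low_scale \<kappa> k a \<longleftrightarrow> (\<exists>\<epsilon>. 0 < \<epsilon> \<and> \<epsilon> < 1 / real k \<and>
     (\<forall>q. 1 / real k \<le> q \<and> q \<le> 1 - 1 / real k \<longrightarrow> dim_ratio \<kappa> a q \<epsilon> \<le> 1 / real k))"

definition has_high_scale :: "real \<Rightarrow> nat \<Rightarrow> coeffs \<Rightarrow> bool" where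
  "has_high_scale \<kappa> k a \<longleftrightarrow> (\<exists>\<epsilon>. 0 < \<epsilon> \<and> \<epsilon> < 1 / real k \<and>
     (\<forall>q. 1 / real k \<le> q \<and> q \<le> 1 - 1 / real k \<longrightarrow> 1 / 3 - 1 / real k \<le> dim_ratio \<kappa> a q \<epsilon>))"

lemma frequently_dim_ratio_le:
  assumes low: "\<And>k. 3 \<le> k \<Longrightarrow> has_low_scale \<kappa> k a" and q: "0 < q" "q < 1" and c: "0 < c"
  shows "\<exists>\<^sub>F \<epsilon> in at_right 0. dim_ratio \<kappa> a q \<epsilon> \<le> c"
proof (rule frequently_at_right_0I)
  fix \<delta> :: real assume "0 < \<delta>"
  then obtain k :: nat where k: "3 \<le> k" "1 / real k < min (min \<delta> c) (min q (1 - q))"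
    using exists_nat_inverse_less[of "min (min \<delta> c) (min q (1 - q))" 3] q c by auto
  obtain \<epsilon> where \<epsilon>: "0 < \<epsilon>" "\<epsilon> < 1 / real k" and
    ratio: "\<forall>q. 1 / real k \<le> q \<and> q \<le> 1 - 1 / real k \<longrightarrow> dim_ratio \<kappa> a q \<epsilon> \<le> 1 / real k"
    using low[OF k(1)] unfolding has_low_scale_def by blast
  have "1 / real k \<le> q" "q \<le> 1 - 1 / real k" "1 / real k < \<delta>" "1 / real k < c"
    using k(2) by auto
  then have "0 < \<epsilon> \<and> \<epsilon> < \<delta> \<and> dim_ratio \<kappa> a q \<epsilon> \<le> 1 / real k"
    using \<epsilon> ratio by auto
  then show "\<exists>\<epsilon>. 0 < \<epsilon> \<and> \<epsilon> < \<delta> \<and> dim_ratio \<kappa> a q \<epsilon> \<le> c"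
    using k(2) by (intro exI[of _ \<epsilon>]) auto
qed

lemma frequently_dim_ratio_ge:
  assumes high: "\<And>k. 3 \<le> k \<Longrightarrow> has_high_scale \<kappa> k a" and q: "0 < q" "q < 1" and c: "0 < c"
  shows "\<exists>\<^sub>F \<epsilon> in at_right 0. 1 / 3 - c \<le> dim_ratio \<kappa> a q \<epsilon>"
proof (rule frequently_at_right_0I)
  fix \<delta> :: real assume "0 < \<delta>"
  then obtain k :: nat where k: "3 \<le> k" "1 / real k < min (min \<delta> c) (min q (1 - q))"
    using exists_nat_inverse_less[of "min (min \<delta> c) (min q (1 - q))" 3] q c by auto
  obtain \<epsilon> where \<epsilon>: "0 < \<epsilon>" "\<epsilon> < 1 / real k" and
    ratio: "\<forall>q. 1 / real k \<le> q \<and> q \<le> 1 - 1 / real k \<longrightarrow> 1 / 3 - 1 / real k \<le> dim_ratio \<kappa> a q \<epsilon>"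
    using high[OF k(1)] unfolding has_high_scale_def by blast
  have "1 / real k \<le> q" "q \<le> 1 - 1 / real k" "1 / real k < \<delta>" "1 / real k < c"
    using k(2) by auto
  then have "0 < \<epsilon> \<and> \<epsilon> < \<delta> \<and> 1 / 3 - 1 / real k \<le> dim_ratio \<kappa> a q \<epsilon>"
    using \<epsilon> ratio by auto
  then show "\<exists>\<epsilon>. 0 < \<epsilon> \<and> \<epsilon> < \<delta> \<and> 1 / 3 - c \<le> dim_ratio \<kappa> a q \<epsilon>"
    using k(2) by (intro exI[of _ \<epsilon>]) auto
qed

lemma total_weight_pos_if_high_scale:
  assumes \<kappa>: "0 < \<kappa>" and a: "a \<in> point_space" and high: "has_high_scale \<kappa> 4 a"
  shows "0 < suminf (shell_weight a)"
proof (rule ccontr)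
  interpret summable_weights "shell_weight a"
    by (rule summable_weights_shell_weight[OF square_summable_point_space[OF a]])
  assume "\<not> 0 < suminf (shell_weight a)"
  then have "suminf (shell_weight a) = 0"
    using suminf_nonneg[OF summable] by simp
  then have "shell_weight a = (\<lambda>n. 0)"
    using suminf_eq_zero_iff[OF summable] by auto
  then have "correlation_term (hyd_eig \<kappa>) (shell_weight a) q \<epsilon> = (\<lambda>n. 0)" for q \<epsilon>
    by (simp add: fun_eq_iff correlation_term_def)
  then have ratio: "dim_ratio \<kappa> a q \<epsilon> = 0" if "0 < q" "q < 1" "0 < \<epsilon>" for q \<epsilon>
    using that by (simp add: dim_ratio_def I_mu_spec_measure[OF \<kappa> a])
  obtain \<epsilon> where "0 < \<epsilon>" "1 / 3 - 1 / 4 \<le> dim_ratio \<kappa> a (1 / 2) \<epsilon>"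
    using high unfolding has_high_scale_def by force
  then show False using ratio[of "1 / 2" \<epsilon>] by simp
qed

lemma lower_gen_dim_eq_0:
  assumes \<kappa>: "0 < \<kappa>" and a: "a \<in> point_space" and q: "0 < q" "q < 1"
    and T: "0 < suminf (shell_weight a)" and low: "\<And>k. 3 \<le> k \<Longrightarrow> has_low_scale \<kappa> k a"
  shows "lower_gen_dim (spec_measure \<kappa> a) q = 0"
proof -
  let ?f = "\<lambda>\<epsilon>. ereal (dim_ratio \<kappa> a q \<epsilon>)"
  let ?g = "\<lambda>\<epsilon>. ereal (q * ln (suminf (shell_weight a)) / ((q - 1) * ln \<epsilon>))"
  have "eventually (\<lambda>\<epsilon>. 0 < \<epsilon> \<and> \<epsilon> < 1) (at_right (0::real))"
    unfolding eventually_at_right_field by (intro exI[of _ 1]) auto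
  then have "Liminf (at_right 0) ?g \<le> Liminf (at_right 0) ?f"
    by (rule Liminf_mono[OF eventually_mono]) (use dim_ratio_ge_total[OF \<kappa> a q _ _ T] in auto)
  moreover have "Liminf (at_right 0) ?g = 0"
    using tendsto_divide_ln_at_right_0[OF q(2)]
    by (intro lim_imp_Liminf) (auto simp: zero_ereal_def)
  moreover have "Liminf (at_right 0) ?f \<le> 0"
  proof (rule ereal_le_epsilon2)
    fix c :: real assume "0 < c"
    then show "Liminf (at_right 0) ?f \<le> 0 + ereal c"
      using frequently_dim_ratio_le[OF low q] by (intro Liminf_le_if_frequently) auto
  qed
  ultimately show ?thesis
    by (simp add: lower_gen_dim_def dim_ratio_def[symmetric])
qed

lemma upper_gen_dim_eq_third:
  assumes \<kappa>: "0 < \<kappa>" and a: "a \<in> point_space" and q: "0 < q" "q < 1"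
    and T: "0 < suminf (shell_weight a)" and high: "\<And>k. 3 \<le> k \<Longrightarrow> has_high_scale \<kappa> k a"
  shows "upper_gen_dim (spec_measure \<kappa> a) q = ereal (1 / 3)"
proof -
  let ?f = "\<lambda>\<epsilon>. ereal (dim_ratio \<kappa> a q \<epsilon>)"
  let ?g = "\<lambda>\<epsilon>. ereal ((ln (rydberg \<kappa> + 4) + q * ln (suminf (shell_weight a)))
    / ((q - 1) * ln \<epsilon>) + 1 / 3)"
  have "eventually (\<lambda>\<epsilon>. 0 < \<epsilon> \<and> \<epsilon> < 1) (at_right (0::real))"
    unfolding eventually_at_right_field by (intro exI[of _ 1]) auto
  then have "Limsup (at_right 0) ?f \<le> Limsup (at_right 0) ?g"
    by (rule Limsup_mono[OF eventually_mono]) (use dim_ratio_le_third[OF \<kappa> a q _ _ T] in auto)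
  moreover have "Limsup (at_right 0) ?g = ereal (1 / 3)"
    using tendsto_add[OF tendsto_divide_ln_at_right_0[OF q(2)] tendsto_const, of _ "1 / 3"]
    by (intro lim_imp_Limsup) auto
  moreover have "ereal (1 / 3) \<le> Limsup (at_right 0) ?f"
  proof (rule ereal_le_epsilon2)
    fix c :: real assume "0 < c"
    then have "ereal (1 / 3 - c) \<le> Limsup (at_right 0) ?f"
      using frequently_dim_ratio_ge[OF high q] by (intro Limsup_ge_if_frequently) auto
    then show "ereal (1 / 3) \<le> Limsup (at_right 0) ?f + ereal c"
      by (cases "Limsup (at_right 0) ?f") auto
  qed
  ultimately show ?thesis
    by (simp add: upper_gen_dim_def dim_ratio_def[symmetric])
qed

section \<open>Low scales near finitely supported vectors\<close>

lemma ln_ratio_le_inverse: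
  fixes I C k q :: real
  assumes I: "0 \<le> I" "I \<le> C" and C: "1 \<le> C" and k: "1 \<le> k" and q: "1 / k \<le> 1 - q"
  shows "ln I / ((q - 1) * ln (exp (- (k\<^sup>2 * ln C + k)))) \<le> 1 / k"
proof -
  have lnC: "0 \<le> ln C" using C by simp
  define D where "D = (q - 1) * ln (exp (- (k\<^sup>2 * ln C + k)))"
  have "ln I \<le> ln C"
    using I C by (cases "I = 0") auto
  have D: "k * ln C + 1 \<le> D"
  proof -
    have "(1 / k) * (k\<^sup>2 * ln C + k) \<le> (1 - q) * (k\<^sup>2 * ln C + k)"
      using q lnC k by (intro mult_right_mono) auto
    moreover have "(1 / k) * (k\<^sup>2 * ln C + k) = k * ln C + 1"
      using k by (simp add: power2_eq_square field_simps)
    ultimately show ?thesis by (simp add: D_def algebra_simps)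
  qed
  have pos: "0 < k * ln C + 1" using k lnC by (simp add: add_nonneg_pos)
  have "ln I / D \<le> ln C / D"
    using \<open>ln I \<le> ln C\<close> D pos by (intro divide_right_mono) auto
  also have "\<dots> \<le> ln C / (k * ln C + 1)"
    using lnC D pos by (intro divide_left_mono) auto
  also have "\<dots> \<le> 1 / k"
    using k pos by (simp add: divide_simps)
  finally show ?thesis by (simp add: D_def)
qed

lemma exp_scale_less_inverse:
  fixes k C :: real
  assumes "1 \<le> C" "1 \<le> k"
  shows "exp (- (k\<^sup>2 * ln C + k)) < 1 / k"
proof -
  have "exp (- (k\<^sup>2 * ln C + k)) \<le> exp (- k)" using assms by simp
  also have "k < exp k"
    using exp_ge_add_one_self[of k] by linarith
  then have "exp (- k) < 1 / k" using assms by (simp add: exp_minus divide_simps)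
  finally show ?thesis .
qed

text \<open>At one tiny scale I_mu stays bounded for all these vectors, while ln \<epsilon> is as large as we
  please.\<close>
lemma has_low_scale_uniform:
  assumes \<kappa>: "0 < \<kappa>" and k: "2 \<le> k" and N: "0 < N" and T: "0 \<le> T"
  shows "\<exists>\<delta>>0. \<forall>c\<in>point_space. suminf (shell_weight c) \<le> T \<longrightarrow>
           (\<Sum>n. if N < n then shell_weight c n else 0) \<le> \<delta> \<longrightarrow> has_low_scale \<kappa> k c"
proof -
  define C where "C = (real N + 1) * (1 + T) + 1"
  define \<epsilon> where "\<epsilon> = exp (- ((real k)\<^sup>2 * ln C + real k))"
  define \<delta> where "\<delta> = (rydberg \<kappa> / ((real N)\<^sup>2 * \<epsilon>) + 1) powr (- real k)"
  have C: "1 \<le> C" using T by (simp add: C_def)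
  have \<epsilon>: "0 < \<epsilon>" "\<epsilon> < 1 / real k"
    using exp_scale_less_inverse[OF C, of "real k"] k by (auto simp: \<epsilon>_def)
  have "0 \<le> rydberg \<kappa> / ((real N)\<^sup>2 * \<epsilon>)" using rydberg_pos[OF \<kappa>] \<epsilon> by simp
  then have \<delta>: "0 < \<delta>" by (simp add: \<delta>_def)
  have "has_low_scale \<kappa> k c"
    if c: "c \<in> point_space" and total: "suminf (shell_weight c) \<le> T"
      and tail: "(\<Sum>n. if N < n then shell_weight c n else 0) \<le> \<delta>" for c
  proof -
    interpret summable_weights "shell_weight c"
      by (rule summable_weights_shell_weight[OF square_summable_point_space[OF c]])
    have "dim_ratio \<kappa> c q \<epsilon> \<le> 1 / real k" if q: "1 / real k \<le> q" "q \<le> 1 - 1 / real k" for q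
    proof -
      have "0 < 1 / real k" using k by simp
      then have q01: "0 < q" "q < 1" using q by linarith+
      have "1 \<le> real k * q" using q k by (simp add: field_simps)
      then have "I_mu (spec_measure \<kappa> c) q \<epsilon> \<le> (real N + 1) * (1 + suminf (shell_weight c)) + 1"
        using correlation_sum_hyd_bounded[OF \<kappa> q01 \<epsilon>(1) N, of "real k"] tail
        by (simp add: I_mu_spec_measure[OF \<kappa> c q01 \<epsilon>(1)] \<delta>_def)
      also have "\<dots> \<le> C" using total by (simp add: C_def)
      finally have I: "I_mu (spec_measure \<kappa> c) q \<epsilon> \<le> C" .
      have I0: "0 \<le> I_mu (spec_measure \<kappa> c) q \<epsilon>"
        using I_mu_spec_measure_ge_total[OF \<kappa> c q01 \<epsilon>(1)] powr_ge_zero order_trans by blast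
      show ?thesis
        using ln_ratio_le_inverse[OF I0 I C, of "real k" q] k q by (simp add: dim_ratio_def \<epsilon>_def)
    qed
    then show ?thesis unfolding has_low_scale_def using \<epsilon> by blast
  qed
  then show ?thesis using \<delta> by blast
qed

lemma has_low_scale_near_finite_support:
  assumes \<kappa>: "0 < \<kappa>" and k: "2 \<le> k" and b: "b \<in> point_space" and N: "0 < N"
    and b_vanishes: "\<And>i. N < fst i \<Longrightarrow> b i = 0"
  shows "\<exists>r>0. \<forall>c\<in>point_space. point_dist b c < r \<longrightarrow> has_low_scale \<kappa> k c"
proof -
  define T where "T = (sqrt (suminf (shell_weight b)) + 1)\<^sup>2"
  obtain \<delta> where \<delta>: "0 < \<delta>" and low: "\<forall>c\<in>point_space. suminf (shell_weight c) \<le> T \<longrightarrow>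
      (\<Sum>n. if N < n then shell_weight c n else 0) \<le> \<delta> \<longrightarrow> has_low_scale \<kappa> k c"
    using has_low_scale_uniform[OF \<kappa> k N, of T] by (auto simp: T_def)
  have "has_low_scale \<kappa> k c" if c: "c \<in> point_space" and bc: "point_dist b c < min 1 (sqrt \<delta>)" for c
  proof -
    interpret summable_weights "shell_weight c"
      by (rule summable_weights_shell_weight[OF square_summable_point_space[OF c]])
    have "sqrt (suminf (shell_weight c)) \<le> sqrt (suminf (shell_weight b)) + 1"
      using sqrt_total_weight_le[OF c b] bc by (simp add: point_dist_commute)
    then have "(sqrt (suminf (shell_weight c)))\<^sup>2 \<le> T"
      unfolding T_def using suminf_nonneg[OF summable] by (intro power_mono) auto
    moreover have "(point_dist c b)\<^sup>2 \<le> (sqrt \<delta>)\<^sup>2"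
      using bc point_dist_nonneg[of c b] by (intro power_mono) (auto simp: point_dist_commute)
    ultimately show ?thesis
      using low c tail_weight_le_point_dist[where N = N, OF c b b_vanishes] \<delta>
        suminf_nonneg[OF summable]
      by simp
  qed
  then show ?thesis using \<delta> by (intro exI[of _ "min 1 (sqrt \<delta>)"]) auto
qed

lemma has_low_scale_approx:
  assumes \<kappa>: "0 < \<kappa>" and k: "2 \<le> k" and a: "a \<in> point_space" and r: "0 < r"
  shows "\<exists>b\<in>point_space. point_dist a b < r \<and>
    (\<exists>s>0. \<forall>c\<in>point_space. point_dist b c < s \<longrightarrow> has_low_scale \<kappa> k c)"
proof -
  obtain N where "0 < N" "point_dist a (truncate N a) < r"
    using truncate_approx[OF a r] by blast
  then show ?thesis
    using has_low_scale_near_finite_support[OF \<kappa> k truncate_in_point_space[OF a], of N]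
      truncate_in_point_space[OF a] by (auto simp: truncate_def)
qed

section \<open>High scales near evenly spread vectors\<close>

lemma ln_ge_of_powr_bound:
  fixes k q w K I :: real
  assumes q: "0 < q" "q < 1" and kq: "1 \<le> k * (1 - q)" and w: "0 < w" "w \<le> 1" and K: "0 < K"
    and I: "K powr (1 - q) * w powr q \<le> I"
  shows "(1 - q) * (ln K + k * ln w) \<le> ln I"
proof -
  have lnw: "ln w \<le> 0" using w by simp
  have "0 < K powr (1 - q) * w powr q" using K w by simp
  then have "ln (K powr (1 - q) * w powr q) \<le> ln I" by (rule ln_mono[OF I])
  then have "(1 - q) * ln K + q * ln w \<le> ln I" using K w by (simp add: ln_mult)
  moreover have "(k * (1 - q)) * ln w \<le> 1 * ln w" using kq lnw by (rule mult_right_mono_neg)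
  moreover have "(1 - q) * ln w \<le> 0" using q lnw by (simp add: mult_nonneg_nonpos)
  ultimately show ?thesis by (simp add: algebra_simps)
qed

text \<open>With scale \<Lambda> / M^3 and K \<ge> M / 2 heavy shells, ln K is about one third of the
  logarithmic scale: this is where the value 1/3 comes from.\<close>
lemma third_log_scale_le:
  fixes k w \<Lambda> K M :: real
  assumes k: "3 \<le> k" and w: "0 < w" "w \<le> 1" and \<Lambda>: "0 < \<Lambda>" and M: "0 < M" "M \<le> 2 * K"
    and lnM: "k * (ln 2 - k * ln w + \<bar>ln \<Lambda>\<bar>) \<le> ln M"
  shows "(1 / 3 - 1 / k) * (3 * ln M - ln \<Lambda>) \<le> ln K + k * ln w"
proof -
  define c where "c = 1 / 3 - 1 / k"
  define Z where "Z = ln 2 - k * ln w + \<bar>ln \<Lambda>\<bar>"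
  have c: "0 \<le> c" "c \<le> 1 / 3" using k by (auto simp: c_def)
  have "k * ln w \<le> 0" using w k by (simp add: mult_nonneg_nonpos)
  then have Z: "0 \<le> Z" unfolding Z_def using abs_ge_zero[of "ln \<Lambda>"] ln_gt_zero[of 2] by linarith
  have "ln (M / 2) \<le> ln K" using M by simp
  then have "ln M - ln 2 \<le> ln K" using M by (simp add: ln_div)
  moreover have "3 * Z \<le> (3 / k) * ln M"
    using lnM k by (simp add: Z_def field_simps)
  moreover have "- c * ln \<Lambda> \<le> \<bar>ln \<Lambda>\<bar>"
  proof -
    have "\<bar>c\<bar> * \<bar>ln \<Lambda>\<bar> \<le> 1 * \<bar>ln \<Lambda>\<bar>" using c by (intro mult_right_mono) auto
    then show ?thesis using abs_ge_minus_self[of "c * ln \<Lambda>"] by (simp add: abs_mult)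
  qed
  moreover have "c * (3 * ln M - ln \<Lambda>) = (1 - 3 / k) * ln M - c * ln \<Lambda>"
    using k by (simp add: c_def field_simps)
  ultimately show ?thesis using Z by (simp add: c_def[symmetric] Z_def algebra_simps)
qed

lemma ln_ratio_ge_third:
  fixes k q w \<Lambda> K M I :: real
  assumes q: "0 < q" "q < 1" and kq: "1 \<le> k * (1 - q)" and k: "3 \<le> k"
    and w: "0 < w" "w \<le> 1" and \<Lambda>: "0 < \<Lambda>"
    and M: "M \<le> 2 * K" "\<Lambda> < M ^ 3" and lnM: "k * (ln 2 - k * ln w + \<bar>ln \<Lambda>\<bar>) \<le> ln M"
    and I: "K powr (1 - q) * w powr q \<le> I"
  shows "1 / 3 - 1 / k \<le> ln I / ((q - 1) * ln (\<Lambda> / M ^ 3))"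
proof -
  define Y where "Y = 3 * ln M - ln \<Lambda>"
  have "0 < M ^ 3" using \<Lambda> M(2) by linarith
  then have M0: "0 < M" by (simp add: zero_less_power_eq)
  have lnY: "(q - 1) * ln (\<Lambda> / M ^ 3) = (1 - q) * Y"
    using M0 \<Lambda> by (simp add: Y_def ln_div ln_realpow algebra_simps)
  have "ln (\<Lambda> / M ^ 3) < 0"
    using M(2) M0 \<Lambda> by (simp add: ln_less_zero_iff)
  then have Y: "0 < Y" using M0 \<Lambda> by (simp add: Y_def ln_div ln_realpow)
  have "(1 - q) * ((1 / 3 - 1 / k) * Y) \<le> (1 - q) * (ln K + k * ln w)"
    using third_log_scale_le[OF k w \<Lambda> M0 M(1) lnM] q by (simp add: Y_def)
  also have "\<dots> \<le> ln I"
    using ln_ge_of_powr_bound[OF q kq w _ I] M0 M(1) by simp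
  finally have "(1 / 3 - 1 / k) * ((1 - q) * Y) \<le> ln I" by (metis mult.left_commute)
  moreover have "0 < (1 - q) * Y" using Y q by simp
  ultimately show ?thesis unfolding lnY by (simp add: le_divide_eq)
qed

definition shell_spread :: "nat \<Rightarrow> nat \<Rightarrow> real \<Rightarrow> coeffs" where
  "shell_spread N0 N1 h =
     (\<lambda>i. if N0 < fst i \<and> fst i \<le> N1 \<and> snd i = (0, 0) then complex_of_real h else 0)"

lemma shell_spread_has_sum:
  "((\<lambda>i. (cmod (shell_spread N0 N1 h i))\<^sup>2) has_sum (real (N1 - N0) * h\<^sup>2)) hyd_index"
proof -
  define S where "S = {N0<..N1} \<times> {(0::nat, 0::int)}"
  have "(\<Sum>i\<in>S. (cmod (shell_spread N0 N1 h i))\<^sup>2) = (\<Sum>i\<in>S. h\<^sup>2)"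
    by (intro sum.cong) (auto simp: S_def shell_spread_def)
  also have "\<dots> = real (N1 - N0) * h\<^sup>2"
    by (simp add: S_def card_cartesian_product)
  finally have "(\<Sum>i\<in>S. (cmod (shell_spread N0 N1 h i))\<^sup>2) = real (N1 - N0) * h\<^sup>2" .
  moreover have "S \<subseteq> hyd_index" by (auto simp: S_def hyd_index_def)
  ultimately show ?thesis
    by (intro has_sum_finite_neutralI[of S]) (auto simp: S_def shell_spread_def)
qed

lemma shell_weight_truncate_add_spread:
  assumes "N0 < n" "n \<le> N1"
  shows "shell_weight (\<lambda>i. truncate N0 a i + shell_spread N0 N1 h i) n = h\<^sup>2"
proof -
  have "(0, 0) \<in> shell n" using assms by (simp add: shell_def)
  have "shell_weight (\<lambda>i. truncate N0 a i + shell_spread N0 N1 h i) n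
      = (\<Sum>y\<in>shell n. if y = (0, 0) then h\<^sup>2 else 0)"
    unfolding shell_weight_def using assms
    by (intro sum.cong) (auto simp: truncate_def shell_spread_def)
  also have "\<dots> = h\<^sup>2"
    using \<open>(0, 0) \<in> shell n\<close> by (simp add: finite_shell)
  finally show ?thesis .
qed

lemma truncate_add_spread_in_point_space:
  assumes "a \<in> point_space"
  shows "(\<lambda>i. truncate N0 a i + shell_spread N0 N1 h i) \<in> point_space"
proof -
  have "(\<lambda>i. (cmod (shell_spread N0 N1 h i))\<^sup>2) summable_on hyd_index"
    using shell_spread_has_sum by (auto simp: summable_on_def)
  then have "(\<lambda>i. (cmod (truncate N0 a i + shell_spread N0 N1 h i))\<^sup>2) summable_on hyd_index"
    by (rule square_summable_add[OF square_summable_point_space[OF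
          truncate_in_point_space[OF assms]]])
  moreover have "truncate N0 a i + shell_spread N0 N1 h i = 0" if "i \<notin> hyd_index" for i
    using that truncate_in_point_space[OF assms] unfolding point_space_def
    by (cases i) (auto simp: shell_spread_def hyd_index_def)
  ultimately show ?thesis by (simp add: point_space_def)
qed

lemma point_dist_truncate_add_spread:
  "point_dist (truncate N0 a) (\<lambda>i. truncate N0 a i + shell_spread N0 N1 h i)
     = sqrt (real (N1 - N0) * h\<^sup>2)"
  using infsumI[OF shell_spread_has_sum[of N0 N1 h]] by (simp add: point_dist_def)

lemma shell_weight_ge_near:
  assumes b: "b \<in> point_space" and c: "c \<in> point_space"
    and h: "sqrt (shell_weight b n) = h" and bc: "point_dist b c \<le> h / 4"
  shows "h\<^sup>2 / 2 \<le> shell_weight c n"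
proof -
  have "h \<le> sqrt (shell_weight c n) + h / 4"
    using sqrt_shell_weight_le[OF c b, of n] h bc by (simp add: point_dist_commute)
  moreover have "0 \<le> h" using h shell_weight_nonneg[of b n] by auto
  ultimately have "(3 / 4 * h)\<^sup>2 \<le> (sqrt (shell_weight c n))\<^sup>2"
    by (intro power_mono) auto
  moreover have "(3 / 4 * h)\<^sup>2 = 9 / 16 * h\<^sup>2" by (simp add: power2_eq_square)
  moreover have "(sqrt (shell_weight c n))\<^sup>2 = shell_weight c n"
    using shell_weight_nonneg[of c n] by simp
  ultimately show ?thesis
    using zero_le_power2[of h] by linarith
qed

lemma exists_shell_range:
  fixes k Z \<Lambda> :: real
  assumes \<Lambda>: "0 < \<Lambda>" and k: "1 \<le> k"
  shows "\<exists>N1. real N1 + 1 \<le> 2 * real (N1 - N0) \<and> \<Lambda> < (real N1 + 1) ^ 3 \<and>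
           k * Z \<le> ln (real N1 + 1) \<and> \<Lambda> / (real N1 + 1) ^ 3 < 1 / k"
proof -
  define N1 where "N1 = max (2 * N0 + 1) (nat \<lceil>exp (k * Z) + \<Lambda> * k\<rceil>)"
  have "exp (k * Z) + \<Lambda> * k \<le> real N1"
    unfolding N1_def by linarith
  moreover have "\<Lambda> \<le> \<Lambda> * k" using \<Lambda> k by simp
  ultimately have large: "exp (k * Z) \<le> real N1 + 1" "\<Lambda> * k < real N1 + 1" "\<Lambda> < real N1 + 1"
    using exp_gt_zero[of "k * Z"] \<Lambda> by linarith+
  have cube: "real N1 + 1 \<le> (real N1 + 1) ^ 3" by (rule self_le_power) auto
  have "\<Lambda> / (real N1 + 1) ^ 3 \<le> \<Lambda> / (real N1 + 1)"
    using \<Lambda> cube by (intro divide_left_mono) auto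
  also have "\<dots> < \<Lambda> / (\<Lambda> * k)"
    using \<Lambda> k large(2) by (intro divide_strict_left_mono) auto
  finally have "\<Lambda> / (real N1 + 1) ^ 3 < 1 / k" using \<Lambda> by simp
  moreover have "k * Z \<le> ln (real N1 + 1)" using large(1) by (simp add: ln_ge_iff)
  moreover have "real N1 + 1 \<le> 2 * real (N1 - N0)" by (auto simp: N1_def)
  ultimately show ?thesis using large(3) cube by (intro exI[of _ N1]) auto
qed

lemma dim_ratio_ge_if_shells_heavy:
  fixes k :: real
  assumes \<kappa>: "0 < \<kappa>" and c: "c \<in> point_space" and q: "0 < q" "q < 1"
    and kq: "1 \<le> k * (1 - q)" and k: "3 \<le> k" and \<eta>: "0 < \<eta>" "\<eta> \<le> 1"
    and N1: "real N1 + 1 \<le> 2 * real (N1 - N0)" "rydberg \<kappa> < (real N1 + 1) ^ 3"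
      "k * (ln 2 - k * ln (\<eta> / 2) + \<bar>ln (rydberg \<kappa>)\<bar>) \<le> ln (real N1 + 1)"
    and heavy: "\<And>n. N0 < n \<Longrightarrow> n \<le> N1 \<Longrightarrow> \<eta> / (2 * real (N1 - N0)) \<le> shell_weight c n"
  shows "1 / 3 - 1 / k \<le> dim_ratio \<kappa> c q (rydberg \<kappa> / (real N1 + 1) ^ 3)"
proof -
  define \<epsilon> where "\<epsilon> = rydberg \<kappa> / (real N1 + 1) ^ 3"
  define K where "K = real (N1 - N0)"
  have K: "0 < K" using N1(1) by (simp add: K_def)
  have \<epsilon>: "0 < \<epsilon>" using rydberg_pos[OF \<kappa>] by (simp add: \<epsilon>_def)
  interpret summable_weights "shell_weight c"
    by (rule summable_weights_shell_weight[OF square_summable_point_space[OF c]])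
  have "(\<eta> / (2 * K)) powr q = (\<eta> / 2) powr q / K powr q"
    using K \<eta> powr_divide[of "\<eta> / 2" K q] by simp
  then have "K powr (1 - q) * (\<eta> / 2) powr q = (\<Sum>n\<in>{N0<..N1}. (\<eta> / (2 * K)) powr q)"
    using K by (simp add: K_def[symmetric] powr_diff)
  also have "\<dots> \<le> (\<Sum>n\<in>{N0<..N1}. shell_weight c n powr q)"
    using heavy \<eta> K q by (intro sum_mono powr_mono2) (auto simp: K_def)
  also have "\<dots> \<le> suminf (correlation_term (hyd_eig \<kappa>) (shell_weight c) q \<epsilon>)"
    by (rule correlation_sum_hyd_isolated[OF \<kappa> q \<epsilon>]) (auto simp: \<epsilon>_def)
  also have "\<dots> = I_mu (spec_measure \<kappa> c) q \<epsilon>"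
    by (rule I_mu_spec_measure[symmetric, OF \<kappa> c q \<epsilon>])
  finally have "K powr (1 - q) * (\<eta> / 2) powr q \<le> I_mu (spec_measure \<kappa> c) q \<epsilon>" .
  then show ?thesis
    using ln_ratio_ge_third[OF q kq k _ _ rydberg_pos[OF \<kappa>], of "\<eta> / 2" "real N1 + 1" K] \<eta> N1
    by (simp add: dim_ratio_def \<epsilon>_def K_def)
qed

lemma has_high_scale_if_shells_heavy:
  assumes \<kappa>: "0 < \<kappa>" and k: "3 \<le> k" and c: "c \<in> point_space" and \<eta>: "0 < \<eta>" "\<eta> \<le> 1"
    and N1: "real N1 + 1 \<le> 2 * real (N1 - N0)" "rydberg \<kappa> < (real N1 + 1) ^ 3"
      "real k * (ln 2 - real k * ln (\<eta> / 2) + \<bar>ln (rydberg \<kappa>)\<bar>) \<le> ln (real N1 + 1)"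
      "rydberg \<kappa> / (real N1 + 1) ^ 3 < 1 / real k"
    and heavy: "\<And>n. N0 < n \<Longrightarrow> n \<le> N1 \<Longrightarrow> \<eta> / (2 * real (N1 - N0)) \<le> shell_weight c n"
  shows "has_high_scale \<kappa> k c"
proof -
  define \<epsilon> where "\<epsilon> = rydberg \<kappa> / (real N1 + 1) ^ 3"
  have "1 / 3 - 1 / real k \<le> dim_ratio \<kappa> c q \<epsilon>"
    if q: "1 / real k \<le> q" "q \<le> 1 - 1 / real k" for q
  proof -
    have "0 < 1 / real k" using k by simp
    then have q01: "0 < q" "q < 1" using q by linarith+
    have "1 \<le> real k * (1 - q)" using q k by (simp add: field_simps)
    then show ?thesis
      using dim_ratio_ge_if_shells_heavy[OF \<kappa> c q01 _ _ \<eta> N1(1-3) heavy] k by (simp add: \<epsilon>_def)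
  qed
  moreover have "0 < \<epsilon>" "\<epsilon> < 1 / real k"
    using N1(4) rydberg_pos[OF \<kappa>] by (simp_all add: \<epsilon>_def)
  ultimately show ?thesis
    unfolding has_high_scale_def by blast
qed

text \<open>Add to the truncation of a at N0 a small equal weight on each of the many shells up to N1 and
  look at the scale rydberg / (N1 + 1)^3, where each of these shells is isolated: I_mu is
  at least of order N1 powr (1 - q), which is of order \<epsilon> powr ((q - 1) / 3).\<close>
lemma has_high_scale_near_truncation:
  assumes \<kappa>: "0 < \<kappa>" and k: "3 \<le> k" and a: "a \<in> point_space" and \<eta>: "0 < \<eta>" "\<eta> \<le> 1"
  shows "\<exists>b\<in>point_space. point_dist (truncate N0 a) b \<le> sqrt \<eta> \<and>
           (\<exists>r>0. \<forall>c\<in>point_space. point_dist b c < r \<longrightarrow> has_high_scale \<kappa> k c)"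
proof -
  obtain N1 where N1: "real N1 + 1 \<le> 2 * real (N1 - N0)" "rydberg \<kappa> < (real N1 + 1) ^ 3"
      "real k * (ln 2 - real k * ln (\<eta> / 2) + \<bar>ln (rydberg \<kappa>)\<bar>) \<le> ln (real N1 + 1)"
      "rydberg \<kappa> / (real N1 + 1) ^ 3 < 1 / real k"
    using exists_shell_range[OF rydberg_pos[OF \<kappa>], of "real k"] k by auto
  define K where "K = real (N1 - N0)"
  define h where "h = sqrt (\<eta> / K)"
  define b where "b = (\<lambda>i. truncate N0 a i + shell_spread N0 N1 h i)"
  have K: "0 < K" using N1(1) by (simp add: K_def)
  have h: "0 < h" "h\<^sup>2 = \<eta> / K" using \<eta> K by (auto simp: h_def)
  have b: "b \<in> point_space" by (simp add: b_def truncate_add_spread_in_point_space[OF a])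
  have "\<eta> / (2 * K) \<le> shell_weight c n"
    if c: "c \<in> point_space" "point_dist b c < h / 4" and n: "N0 < n" "n \<le> N1" for c n
  proof -
    have "sqrt (shell_weight b n) = h"
      using h(1) by (simp add: b_def shell_weight_truncate_add_spread[OF n])
    then have "h\<^sup>2 / 2 \<le> shell_weight c n"
      using c(2) by (intro shell_weight_ge_near[OF b c(1)]) auto
    then show ?thesis using h(2) by simp
  qed
  then have "has_high_scale \<kappa> k c" if "c \<in> point_space" "point_dist b c < h / 4" for c
    using has_high_scale_if_shells_heavy[OF \<kappa> k _ \<eta> N1] that by (simp add: K_def)
  moreover have "point_dist (truncate N0 a) b = sqrt \<eta>"
    using point_dist_truncate_add_spread[of N0 a N1 h] h K by (simp add: b_def K_def)
  ultimately show ?thesis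
    using b h by (intro bexI[of _ b] conjI exI[of _ "h / 4"]) auto
qed

lemma has_high_scale_approx:
  assumes \<kappa>: "0 < \<kappa>" and k: "3 \<le> k" and a: "a \<in> point_space" and r: "0 < r"
  shows "\<exists>b\<in>point_space. point_dist a b < r \<and>
    (\<exists>s>0. \<forall>c\<in>point_space. point_dist b c < s \<longrightarrow> has_high_scale \<kappa> k c)"
proof -
  define \<eta> where "\<eta> = min 1 ((r / 2)\<^sup>2)"
  have \<eta>: "0 < \<eta>" "\<eta> \<le> 1" "sqrt \<eta> \<le> r / 2"
    using r real_sqrt_le_mono[of \<eta> "(r / 2)\<^sup>2"] by (auto simp: \<eta>_def)
  obtain N where N: "point_dist a (truncate N a) < r / 2"
    using truncate_approx[OF a, of "r / 2"] r by auto
  obtain b where b: "b \<in> point_space" "point_dist (truncate N a) b \<le> sqrt \<eta>"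
    and ball: "\<exists>s>0. \<forall>c\<in>point_space. point_dist b c < s \<longrightarrow> has_high_scale \<kappa> k c"
    using has_high_scale_near_truncation[OF \<kappa> k a \<eta>(1,2), of N] by blast
  have "point_dist a b < r"
    using point_dist_triangle[OF a truncate_in_point_space[OF a, of N] b(1)] N b(2) \<eta>(3) by linarith
  then show ?thesis using b(1) ball by blast
qed

definition scale_residual :: "real \<Rightarrow> coeffs set" where
  "scale_residual \<kappa> = (\<Inter>k. point_interior (has_low_scale \<kappa> (k + 3)))
                         \<inter> (\<Inter>k. point_interior (has_high_scale \<kappa> (k + 3)))"

lemma generic_point_set_scale_residual: "0 < \<kappa> \<Longrightarrow> generic_point_set (scale_residual \<kappa>)"
  unfolding scale_residual_def
  by (intro generic_point_set_Int generic_point_setI conjI point_open_interior point_dense_interior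
      has_low_scale_approx has_high_scale_approx) auto

lemma scale_residual_imp:
  assumes "a \<in> scale_residual \<kappa>"
  shows "a \<in> point_space" and "\<And>k. 3 \<le> k \<Longrightarrow> has_low_scale \<kappa> k a"
    and "\<And>k. 3 \<le> k \<Longrightarrow> has_high_scale \<kappa> k a"
proof -
  show "a \<in> point_space"
    using assms point_interior_subset by (auto simp: scale_residual_def)
  fix k :: nat assume "3 \<le> k"
  then have "k = (k - 3) + 3" by simp
  then show "has_low_scale \<kappa> k a" "has_high_scale \<kappa> k a"
    using assms point_interior_imp by (auto simp: scale_residual_def) metis+
qed

lemma gen_dims_scale_residual:
  assumes \<kappa>: "0 < \<kappa>" and a: "a \<in> scale_residual \<kappa>" and q: "0 < q" "q < 1"
  shows "lower_gen_dim (spec_measure \<kappa> a) q = 0 \<and> upper_gen_dim (spec_measure \<kappa> a) q = ereal (1/3)"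
proof -
  note ps = scale_residual_imp(1)[OF a]
  have T: "0 < suminf (shell_weight a)"
    using total_weight_pos_if_high_scale[OF \<kappa> ps scale_residual_imp(3)[OF a]] by simp
  show ?thesis
    using lower_gen_dim_eq_0[OF \<kappa> ps q T scale_residual_imp(2)[OF a]]
      upper_gen_dim_eq_third[OF \<kappa> ps q T scale_residual_imp(3)[OF a]] by blast
qed

theorem theorem1:
  fixes \<kappa> :: real
  assumes "\<kappa> > 0"
  shows "\<exists>R. generic_point_set R \<and>
           (\<forall>a\<in>R. \<forall>q::real. 0 < q \<and> q < 1 \<longrightarrow>
              lower_gen_dim (spec_measure \<kappa> a) q = 0 \<and>
              upper_gen_dim (spec_measure \<kappa> a) q = ereal (1/3))"
  using generic_point_set_scale_residual[OF assms] gen_dims_scale_residual[OF assms] by blast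

end
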